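(* Let $\mathcal M$ be an $\aleph_1$-saturated structure. Then $\mathcal M$ is unstable if and only if $\mathcal M$ trace defines $(\mathbb Q,<)$, and $\mathcal M$ has the independence property (IP, i.e. is not NIP) if and only if $\mathcal M$ trace defines the random graph.
   Context: The random graph is the Fraïssé limit of the class of finite symmetric irreflexive graphs, viewed as a structure $(V,E)$ with one binary relation. "Definable" means definable with parameters. For structures $\mathcal M,\mathcal O$ and an injection $\tau:O\to M^m$, $\mathcal M$ trace defines $\mathcal O$ via $\tau$ if for every $n$ and every $\mathcal O$-definable $X\subseteq O^n$ there is an $\mathcal M$-definable $Y\subseteq M^{mn}$ with $X=\{(a_1,\dots,a_n)\in O^n:(\tau(a_1),\dots,\tau(a_n))\in Y\}$; $\mathcal M$ trace defines $\mathcal O$ if it does so via some injection $\tau:O\to M^m$ for some $m$. *)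

theory Defs
  imports Main "HOL-Library.Countable_Set"
begin

datatype 'f trm = Var nat | Fn 'f "'f trm list"

datatype ('f, 'r) fm =
    FF
  | Eq "'f trm" "'f trm"
  | Rel 'r "'f trm list"
  | Neg "('f, 'r) fm"
  | Conj "('f, 'r) fm" "('f, 'r) fm"
  | Ex nat "('f, 'r) fm"

text \<open>A structure with universe the whole type 'a, a signature given by sets of
  function and relation symbols with arities, and their interpretations.\<close>
record ('a, 'f, 'r) struc =
  fsyms   :: "'f set"
  farity  :: "'f \<Rightarrow> nat"
  finterp :: "'f \<Rightarrow> 'a list \<Rightarrow> 'a"
  rsyms   :: "'r set"
  rarity  :: "'r \<Rightarrow> nat"
  rinterp :: "'r \<Rightarrow> 'a list \<Rightarrow> bool"

fun wf_trm :: "('a, 'f, 'r, 'z) struc_scheme \<Rightarrow> 'f trm \<Rightarrow> bool" where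
  "wf_trm S (Var n) = True"
| "wf_trm S (Fn f ts) =
     (f \<in> fsyms S \<and> length ts = farity S f \<and> (\<forall>t\<in>set ts. wf_trm S t))"

fun eval_trm :: "('a, 'f, 'r, 'z) struc_scheme \<Rightarrow> (nat \<Rightarrow> 'a) \<Rightarrow> 'f trm \<Rightarrow> 'a" where
  "eval_trm S v (Var n) = v n"
| "eval_trm S v (Fn f ts) = finterp S f (map (eval_trm S v) ts)"

fun fv_trm :: "'f trm \<Rightarrow> nat set" where
  "fv_trm (Var n) = {n}"
| "fv_trm (Fn f ts) = (\<Union>t\<in>set ts. fv_trm t)"

fun wf_fm :: "('a, 'f, 'r, 'z) struc_scheme \<Rightarrow> ('f, 'r) fm \<Rightarrow> bool" where
  "wf_fm S FF = True"
| "wf_fm S (Eq t u) = (wf_trm S t \<and> wf_trm S u)"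
| "wf_fm S (Rel r ts) =
     (r \<in> rsyms S \<and> length ts = rarity S r \<and> (\<forall>t\<in>set ts. wf_trm S t))"
| "wf_fm S (Neg \<phi>) = wf_fm S \<phi>"
| "wf_fm S (Conj \<phi> \<psi>) = (wf_fm S \<phi> \<and> wf_fm S \<psi>)"
| "wf_fm S (Ex x \<phi>) = wf_fm S \<phi>"

fun fv :: "('f, 'r) fm \<Rightarrow> nat set" where
  "fv FF = {}"
| "fv (Eq t u) = fv_trm t \<union> fv_trm u"
| "fv (Rel r ts) = (\<Union>t\<in>set ts. fv_trm t)"
| "fv (Neg \<phi>) = fv \<phi>"
| "fv (Conj \<phi> \<psi>) = fv \<phi> \<union> fv \<psi>"
| "fv (Ex x \<phi>) = fv \<phi> - {x}"

fun sat :: "('a, 'f, 'r, 'z) struc_scheme \<Rightarrow> (nat \<Rightarrow> 'a) \<Rightarrow> ('f, 'r) fm \<Rightarrow> bool" where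
  "sat S v FF = False"
| "sat S v (Eq t u) = (eval_trm S v t = eval_trm S v u)"
| "sat S v (Rel r ts) = rinterp S r (map (eval_trm S v) ts)"
| "sat S v (Neg \<phi>) = (\<not> sat S v \<phi>)"
| "sat S v (Conj \<phi> \<psi>) = (sat S v \<phi> \<and> sat S v \<psi>)"
| "sat S v (Ex x \<phi>) = (\<exists>a. sat S (v(x := a)) \<phi>)"

definition asg :: "'a list \<Rightarrow> (nat \<Rightarrow> 'a) \<Rightarrow> nat \<Rightarrow> 'a" where
  "asg xs v = (\<lambda>i. if i < length xs then xs ! i else v i)"

text \<open>X \<subseteq> M^n (n-tuples as lists of length n) is definable with parameters:
  there is a formula \<phi>(x_0..x_{n-1}, y...) and parameters v for the remaining variables.\<close>
definition definable :: "('a, 'f, 'r, 'z) struc_scheme \<Rightarrow> nat \<Rightarrow> 'a list set \<Rightarrow> bool" where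
  "definable S n X \<longleftrightarrow>
     (\<exists>\<phi> v. wf_fm S \<phi> \<and> X = {xs. length xs = n \<and> sat S (asg xs v) \<phi>})"

definition trace_defines_via ::
  "('a, 'f, 'r, 'z) struc_scheme \<Rightarrow> ('b, 'g, 's, 'y) struc_scheme \<Rightarrow> nat \<Rightarrow> ('b \<Rightarrow> 'a list) \<Rightarrow> bool" where
  "trace_defines_via M Ost m \<tau> \<longleftrightarrow>
     inj \<tau> \<and> (\<forall>b. length (\<tau> b) = m) \<and>
     (\<forall>n X. definable Ost n X \<longrightarrow>
        (\<exists>Y. definable M (m * n) Y \<and>
             X = {bs. length bs = n \<and> concat (map \<tau> bs) \<in> Y}))"

definition trace_defines ::
  "('a, 'f, 'r, 'z) struc_scheme \<Rightarrow> ('b, 'g, 's, 'y) struc_scheme \<Rightarrow> bool" where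
  "trace_defines M Ost \<longleftrightarrow> (\<exists>m \<tau>. trace_defines_via M Ost m \<tau>)"

definition stable :: "('a, 'f, 'r, 'z) struc_scheme \<Rightarrow> bool" where
  "stable M \<longleftrightarrow> \<not> (\<exists>\<phi> p q. wf_fm M \<phi> \<and> fv \<phi> \<subseteq> {..<p+q} \<and>
      (\<forall>N. \<exists>(a :: nat \<Rightarrow> 'a list) (b :: nat \<Rightarrow> 'a list).
          (\<forall>i. length (a i) = p \<and> length (b i) = q) \<and>
          (\<forall>i<N. \<forall>j<N. sat M (asg (a i @ b j) (\<lambda>_. undefined)) \<phi> \<longleftrightarrow> i < j)))"

definition has_IP :: "('a, 'f, 'r, 'z) struc_scheme \<Rightarrow> bool" where
  "has_IP M \<longleftrightarrow> (\<exists>\<phi> p q. wf_fm M \<phi> \<and> fv \<phi> \<subseteq> {..<p+q} \<and>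
      (\<forall>N. \<exists>(a :: nat \<Rightarrow> 'a list) (b :: nat set \<Rightarrow> 'a list).
          (\<forall>i. length (a i) = p) \<and> (\<forall>S. length (b S) = q) \<and>
          (\<forall>i<N. \<forall>S. S \<subseteq> {..<N} \<longrightarrow>
               (sat M (asg (a i @ b S) (\<lambda>_. undefined)) \<phi> \<longleftrightarrow> i \<in> S))))"

definition aleph1_saturated :: "('a, 'f, 'r, 'z) struc_scheme \<Rightarrow> bool" where
  "aleph1_saturated M \<longleftrightarrow>
     (\<forall>(A :: 'a set) (\<Phi> :: (('f, 'r) fm \<times> (nat \<Rightarrow> 'a)) set).
        countable A \<longrightarrow>
        (\<forall>(\<phi>, w) \<in> \<Phi>. wf_fm M \<phi> \<and> (\<forall>i. i \<noteq> 0 \<longrightarrow> w i \<in> A)) \<longrightarrow>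
        (\<forall>F. F \<subseteq> \<Phi> \<longrightarrow> finite F \<longrightarrow> (\<exists>c. \<forall>(\<phi>, w) \<in> F. sat M (w(0 := c)) \<phi>)) \<longrightarrow>
        (\<exists>c. \<forall>(\<phi>, w) \<in> \<Phi>. sat M (w(0 := c)) \<phi>))"

definition rat_order :: "(rat, unit, unit) struc" where
  "rat_order = \<lparr> fsyms = {}, farity = (\<lambda>_. 0), finterp = (\<lambda>_ _. 0),
                 rsyms = {()}, rarity = (\<lambda>_. 2), rinterp = (\<lambda>_ xs. xs ! 0 < xs ! 1) \<rparr>"

definition graph_struc :: "(nat \<Rightarrow> nat \<Rightarrow> bool) \<Rightarrow> (nat, unit, unit) struc" where
  "graph_struc E = \<lparr> fsyms = {}, farity = (\<lambda>_. 0), finterp = (\<lambda>_ _. 0),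
                     rsyms = {()}, rarity = (\<lambda>_. 2), rinterp = (\<lambda>_ xs. E (xs ! 0) (xs ! 1)) \<rparr>"

text \<open>E is (a copy on the countable set nat of) the Fraisse limit of the class of finite
  symmetric irreflexive graphs: a countable symmetric irreflexive graph whose age
  contains every finite such graph, and which is ultrahomogeneous.\<close>
definition is_random_graph :: "(nat \<Rightarrow> nat \<Rightarrow> bool) \<Rightarrow> bool" where
  "is_random_graph E \<longleftrightarrow>
     (\<forall>x y. E x y \<longrightarrow> E y x) \<and> (\<forall>x. \<not> E x x) \<and>
     (\<forall>(S :: nat set) G. finite S \<longrightarrow>
        (\<forall>x\<in>S. \<forall>y\<in>S. G x y \<longrightarrow> G y x) \<longrightarrow> (\<forall>x\<in>S. \<not> G x x) \<longrightarrow>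
        (\<exists>f. inj_on f S \<and> (\<forall>x\<in>S. \<forall>y\<in>S. G x y \<longleftrightarrow> E (f x) (f y)))) \<and>
     (\<forall>A f. finite A \<longrightarrow> inj_on f A \<longrightarrow> (\<forall>x\<in>A. \<forall>y\<in>A. E x y \<longleftrightarrow> E (f x) (f y)) \<longrightarrow>
        (\<exists>g. bij g \<and> (\<forall>x y. E x y \<longleftrightarrow> E (g x) (g y)) \<and> (\<forall>x\<in>A. g x = f x)))"

end

theory Submission
  imports Defs
begin

text \<open>If a formula \<open>\<phi>(x; y)\<close> has the order property
  (the independence property), \<open>\<aleph>\<^sub>1\<close>-saturation turns its finite configurations into
  tuples \<open>a\<^sub>u, b\<^sub>v\<close> indexed by \<open>\<rat>\<close> (by Rado's graph) with \<open>\<phi>(a\<^sub>u, b\<^sub>v)\<close> iff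
  \<open>u < v\<close> (iff \<open>u\<close> and \<open>v\<close> are adjacent). Then \<open>u \<mapsto> a\<^sub>u b\<^sub>u\<close> is a trace embedding:
  both targets are ultrahomogeneous binary structures, so a set definable with parameters
  is a finite union of quantifier-free types over the parameters, and each such type is
  defined in \<open>M\<close> by a Boolean combination of instances of \<open>\<phi>\<close> and equations.
  Conversely, a trace embedding pulls the order, or the edge relation together with the
  extension property of the random graph, back to a formula with the order or independence
  property.\<close>

section \<open>Syntax of formulas\<close>

lemma eval_trm_cong:
  "(\<And>i. i \<in> fv_trm t \<Longrightarrow> v i = w i) \<Longrightarrow> eval_trm S v t = eval_trm S w t"
proof (induction t)
  case (Fn g ts)
  have "map (eval_trm S v) ts = map (eval_trm S w) ts"
  proof (rule map_cong)
    fix x assume x: "x \<in> set ts"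
    show "eval_trm S v x = eval_trm S w x"
      by (rule Fn.IH[OF x]) (use Fn.prems x in force)
  qed simp
  then show ?case by (simp only: eval_trm.simps)
qed simp

lemma sat_cong: "(\<And>i. i \<in> fv \<phi> \<Longrightarrow> v i = w i) \<Longrightarrow> sat S v \<phi> = sat S w \<phi>"
proof (induction \<phi> arbitrary: v w)
  case (Eq t u)
  then show ?case using eval_trm_cong[of t v w S] eval_trm_cong[of u v w S] by auto
next
  case (Rel r ts)
  have "map (eval_trm S v) ts = map (eval_trm S w) ts"
  proof (rule map_cong)
    fix x assume x: "x \<in> set ts"
    show "eval_trm S v x = eval_trm S w x"
      by (rule eval_trm_cong) (use Rel.prems x in force)
  qed simp
  then show ?case by (simp only: sat.simps)
next
  case (Ex x \<phi>)
  have "sat S (v(x := a)) \<phi> = sat S (w(x := a)) \<phi>" for a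
    by (rule Ex.IH) (use Ex.prems in auto)
  then show ?case by simp
next
  case (Neg \<phi>)
  have "sat S v \<phi> = sat S w \<phi>" by (rule Neg.IH) (use Neg.prems in auto)
  then show ?case by simp
next
  case (Conj \<phi> \<psi>)
  have "sat S v \<phi> = sat S w \<phi>" by (rule Conj.IH(1)) (use Conj.prems in auto)
  moreover have "sat S v \<psi> = sat S w \<psi>" by (rule Conj.IH(2)) (use Conj.prems in auto)
  ultimately show ?case by simp
qed simp_all

lemma finite_fv: "finite (fv \<phi>)"
proof -
  have "finite (fv_trm t)" for t :: "'f trm"
    by (induction t) auto
  then show ?thesis by (induction \<phi>) auto
qed

lemma fv_bounded_obtain:
  obtains B where "fv \<phi> \<subseteq> {..<n + B}"
proof -
  obtain B where "\<forall>i\<in>fv \<phi>. i < B"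
    using finite_nat_bounded[OF finite_fv] by (auto simp: subset_eq)
  then show ?thesis by (intro that[of B]) auto
qed

lemma asg_cong: "length xs = n \<Longrightarrow> fv \<phi> \<subseteq> {..<n} \<Longrightarrow> sat S (asg xs v) \<phi> = sat S (asg xs w) \<phi>"
  by (rule sat_cong) (auto simp: asg_def)

lemma asg_append_params:
  assumes "fv \<phi> \<subseteq> {..<length xs + k}"
  shows "sat S (asg xs v) \<phi> = sat S (asg (xs @ map v [length xs..<length xs + k]) w) \<phi>"
  by (rule sat_cong) (use assms in \<open>auto simp: asg_def nth_append\<close>)

fun rename_trm :: "(nat \<Rightarrow> nat) \<Rightarrow> 'f trm \<Rightarrow> 'f trm" where
  "rename_trm f (Var n) = Var (f n)"
| "rename_trm f (Fn g ts) = Fn g (map (rename_trm f) ts)"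

fun rename_fm :: "(nat \<Rightarrow> nat) \<Rightarrow> ('f, 'r) fm \<Rightarrow> ('f, 'r) fm" where
  "rename_fm f FF = FF"
| "rename_fm f (Eq t u) = Eq (rename_trm f t) (rename_trm f u)"
| "rename_fm f (Rel r ts) = Rel r (map (rename_trm f) ts)"
| "rename_fm f (Neg \<phi>) = Neg (rename_fm f \<phi>)"
| "rename_fm f (Conj \<phi> \<psi>) = Conj (rename_fm f \<phi>) (rename_fm f \<psi>)"
| "rename_fm f (Ex x \<phi>) = Ex (f x) (rename_fm f \<phi>)"

lemma eval_rename_trm: "eval_trm S v (rename_trm f t) = eval_trm S (v \<circ> f) t"
  by (induction t) (auto cong: map_cong)

lemma fv_rename_trm: "fv_trm (rename_trm f t) = f ` fv_trm t"
  by (induction t) auto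

lemma wf_rename_trm: "wf_trm S (rename_trm f t) = wf_trm S t"
  by (induction t) auto

lemma sat_rename_fm: "inj f \<Longrightarrow> sat S v (rename_fm f \<phi>) = sat S (v \<circ> f) \<phi>"
proof (induction \<phi> arbitrary: v)
  case (Ex x \<phi>)
  have upd: "(v(f x := a)) \<circ> f = (v \<circ> f)(x := a)" for a
    using Ex.prems by (auto simp: fun_eq_iff inj_eq)
  have "sat S v (rename_fm f (Ex x \<phi>)) = (\<exists>a. sat S ((v(f x := a)) \<circ> f) \<phi>)"
    using Ex.IH[OF Ex.prems] by (simp del: fun_upd_apply comp_apply)
  also have "\<dots> = sat S (v \<circ> f) (Ex x \<phi>)"
    by (simp only: upd sat.simps)
  finally show ?case .
qed (simp_all add: eval_rename_trm comp_def)

lemma fv_rename_fm: "inj f \<Longrightarrow> fv (rename_fm f \<phi>) = f ` fv \<phi>"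
  by (induction \<phi>) (simp_all add: fv_rename_trm image_Un image_UN image_set_diff)

lemma wf_rename_fm: "wf_fm S (rename_fm f \<phi>) = wf_fm S \<phi>"
  by (induction \<phi>) (auto simp: wf_rename_trm)

primrec ex_block :: "nat \<Rightarrow> nat \<Rightarrow> ('f, 'r) fm \<Rightarrow> ('f, 'r) fm" where
  "ex_block H 0 \<theta> = \<theta>"
| "ex_block H (Suc k) \<theta> = ex_block H k (Ex (H + k) \<theta>)"

definition override_block :: "nat \<Rightarrow> 'a list \<Rightarrow> (nat \<Rightarrow> 'a) \<Rightarrow> nat \<Rightarrow> 'a" where
  "override_block H us w = (\<lambda>i. if H \<le> i \<and> i < H + length us then us ! (i - H) else w i)"

lemma sat_ex_block:
  "sat S w (ex_block H k \<theta>) \<longleftrightarrow> (\<exists>us. length us = k \<and> sat S (override_block H us w) \<theta>)"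
proof (induction k arbitrary: \<theta>)
  case 0
  have "override_block H [] w = w" by (auto simp: override_block_def fun_eq_iff)
  then show ?case by auto
next
  case (Suc k)
  have snoc: "(override_block H us w)(H + k := a) = override_block H (us @ [a]) w"
    if "length us = k" for us a
    using that by (auto simp: override_block_def fun_eq_iff nth_append)
  have "sat S w (ex_block H (Suc k) \<theta>) \<longleftrightarrow>
      (\<exists>us. length us = k \<and> (\<exists>a. sat S ((override_block H us w)(H + k := a)) \<theta>))"
    by (simp add: Suc del: fun_upd_apply)
  also have "\<dots> \<longleftrightarrow> (\<exists>us a. length us = k \<and> sat S (override_block H (us @ [a]) w) \<theta>)"
    by (rule ex_cong1) (use snoc in \<open>auto simp del: fun_upd_apply\<close>)
  also have "\<dots> \<longleftrightarrow> (\<exists>us. length us = Suc k \<and> sat S (override_block H us w) \<theta>)"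
    by (metis length_append_singleton length_Suc_conv_rev)
  finally show ?case .
qed

lemma fv_ex_block: "fv (ex_block H k \<theta>) = fv \<theta> - {H..<H + k}"
  by (induction k arbitrary: \<theta>) auto

lemma wf_ex_block: "wf_fm S (ex_block H k \<theta>) = wf_fm S \<theta>"
  by (induction k arbitrary: \<theta>) auto

definition conj_list :: "('f, 'r) fm list \<Rightarrow> ('f, 'r) fm" where
  "conj_list \<phi>s = foldr Conj \<phi>s (Neg FF)"

lemma sat_conj_list: "sat S v (conj_list \<phi>s) \<longleftrightarrow> (\<forall>\<phi>\<in>set \<phi>s. sat S v \<phi>)"
  by (induction \<phi>s) (auto simp: conj_list_def)

lemma fv_conj_list: "fv (conj_list \<phi>s) = (\<Union>\<phi>\<in>set \<phi>s. fv \<phi>)"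
  by (induction \<phi>s) (auto simp: conj_list_def)

lemma wf_conj_list: "wf_fm S (conj_list \<phi>s) = (\<forall>\<phi>\<in>set \<phi>s. wf_fm S \<phi>)"
  by (induction \<phi>s) (auto simp: conj_list_def)

section \<open>Parameter-free definability\<close>

text \<open>The default assignment \<open>\<lambda>_. undefined\<close> is irrelevant because the free variables are
  among the first \<open>n\<close>.\<close>
definition definable0 :: "('a, 'f, 'r, 'z) struc_scheme \<Rightarrow> nat \<Rightarrow> 'a list set \<Rightarrow> bool" where
  "definable0 S n X \<longleftrightarrow> (\<exists>\<phi>. wf_fm S \<phi> \<and> fv \<phi> \<subseteq> {..<n} \<and>
      X = {xs. length xs = n \<and> sat S (asg xs (\<lambda>_. undefined)) \<phi>})"

lemma definable0_length: "definable0 S n X \<Longrightarrow> xs \<in> X \<Longrightarrow> length xs = n"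
  unfolding definable0_def by auto

lemma definable0_formula:
  assumes "wf_fm S \<phi>" "fv \<phi> \<subseteq> {..<n}"
  shows "definable0 S n {xs. length xs = n \<and> sat S (asg xs v) \<phi>}"
proof -
  have "sat S (asg xs v) \<phi> = sat S (asg xs (\<lambda>_. undefined)) \<phi>" if "length xs = n" for xs
    using asg_cong[OF that assms(2)] .
  then show ?thesis unfolding definable0_def using assms by (intro exI[of _ \<phi>]) auto
qed

lemma definable0_empty: "definable0 S n {}"
  unfolding definable0_def by (rule exI[of _ FF]) auto

lemma definable0_all: "definable0 S n {xs. length xs = n}"
  unfolding definable0_def by (rule exI[of _ "Neg FF"]) auto

lemma definable0_compl: "definable0 S n X \<Longrightarrow> definable0 S n {xs. length xs = n \<and> xs \<notin> X}"
  unfolding definable0_def by (elim exE conjE, intro exI[of _ "Neg _"]) auto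

lemma definable0_Int: "definable0 S n X \<Longrightarrow> definable0 S n Y \<Longrightarrow> definable0 S n (X \<inter> Y)"
  unfolding definable0_def
proof (elim exE conjE)
  fix \<phi> \<psi>
  assume "wf_fm S \<phi>" "fv \<phi> \<subseteq> {..<n}" "X = {xs. length xs = n \<and> sat S (asg xs (\<lambda>_. undefined)) \<phi>}"
    "wf_fm S \<psi>" "fv \<psi> \<subseteq> {..<n}" "Y = {xs. length xs = n \<and> sat S (asg xs (\<lambda>_. undefined)) \<psi>}"
  then show "\<exists>\<chi>. wf_fm S \<chi> \<and> fv \<chi> \<subseteq> {..<n} \<and>
      X \<inter> Y = {xs. length xs = n \<and> sat S (asg xs (\<lambda>_. undefined)) \<chi>}"
    by (intro exI[of _ "Conj \<phi> \<psi>"]) auto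
qed

lemma definable0_Un:
  assumes "definable0 S n X" "definable0 S n Y"
  shows "definable0 S n (X \<union> Y)"
proof -
  have "X \<union> Y = {xs. length xs = n \<and>
      xs \<notin> {xs. length xs = n \<and> xs \<notin> X} \<inter> {xs. length xs = n \<and> xs \<notin> Y}}"
    using definable0_length[OF assms(1)] definable0_length[OF assms(2)] by auto
  then show ?thesis using assms by (simp only:) (intro definable0_compl definable0_Int)
qed

lemma definable0_INT:
  "finite I \<Longrightarrow> (\<And>i. i \<in> I \<Longrightarrow> definable0 S n (X i)) \<Longrightarrow>
    definable0 S n ({xs. length xs = n} \<inter> (\<Inter>i\<in>I. X i))"
proof (induction I rule: finite_induct)
  case empty
  then show ?case using definable0_all by simp
next
  case (insert i I)
  have "{xs. length xs = n} \<inter> (\<Inter>j\<in>insert i I. X j) = X i \<inter> ({xs. length xs = n} \<inter> (\<Inter>j\<in>I. X j))"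
    by auto
  then show ?case using insert by (simp add: definable0_Int)
qed

lemma definable0_UN:
  "finite I \<Longrightarrow> (\<And>i. i \<in> I \<Longrightarrow> definable0 S n (X i)) \<Longrightarrow> definable0 S n (\<Union>i\<in>I. X i)"
  by (induction I rule: finite_induct) (simp_all add: definable0_empty definable0_Un)

lemma definable0_project:
  assumes "definable0 S (n + k) X"
  shows "definable0 S n {xs. \<exists>ys. length ys = k \<and> xs @ ys \<in> X}"
proof -
  obtain \<phi> where \<phi>: "wf_fm S \<phi>" "fv \<phi> \<subseteq> {..<n + k}"
    and X: "X = {xs. length xs = n + k \<and> sat S (asg xs (\<lambda>_. undefined)) \<phi>}"
    using assms unfolding definable0_def by blast
  have "sat S (asg xs (\<lambda>_. undefined)) (ex_block n k \<phi>) \<longleftrightarrow>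
      (\<exists>ys. length ys = k \<and> xs @ ys \<in> X)" if "length xs = n" for xs
  proof -
    have "sat S (override_block n ys (asg xs (\<lambda>_. undefined))) \<phi> =
        sat S (asg (xs @ ys) (\<lambda>_. undefined)) \<phi>" if "length ys = k" for ys
      by (rule sat_cong) (use \<phi>(2) \<open>length xs = n\<close> that in \<open>auto simp: override_block_def asg_def nth_append\<close>)
    then have "sat S (asg xs (\<lambda>_. undefined)) (ex_block n k \<phi>) \<longleftrightarrow>
        (\<exists>ys. length ys = k \<and> sat S (asg (xs @ ys) (\<lambda>_. undefined)) \<phi>)"
      unfolding sat_ex_block by auto
    then show ?thesis using that by (simp add: X)
  qed
  moreover have "length ys = k \<Longrightarrow> xs @ ys \<in> X \<Longrightarrow> length xs = n" for xs ys
    using X by auto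
  ultimately have "{xs. \<exists>ys. length ys = k \<and> xs @ ys \<in> X} =
      {xs. length xs = n \<and> sat S (asg xs (\<lambda>_. undefined)) (ex_block n k \<phi>)}"
    by blast
  moreover have "fv (ex_block n k \<phi>) \<subseteq> {..<n}"
    using \<phi>(2) by (auto simp: fv_ex_block)
  ultimately show ?thesis
    unfolding definable0_def using \<phi>(1) by (intro exI[of _ "ex_block n k \<phi>"]) (simp add: wf_ex_block)
qed

text \<open>The defining formula is \<open>\<exists>u. (\<And>l<k. u\<^sub>l = x\<^bsub>\<sigma> l\<^esub>) \<and> \<phi>(u)\<close>, with the variables of \<open>\<phi>\<close>
  shifted by \<open>N\<close> to keep \<open>u\<close> apart from \<open>x\<close>; a direct renaming could capture variables.\<close>
lemma definable0_reindex:
  fixes S :: "('a, 'f, 'r, 'z) struc_scheme"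
  assumes Z: "definable0 S k Z" and \<sigma>: "\<And>l. l < k \<Longrightarrow> \<sigma> l < N"
  shows "definable0 S N {ws. length ws = N \<and> map (\<lambda>l. ws ! \<sigma> l) [0..<k] \<in> Z}"
proof -
  obtain \<phi> where \<phi>: "wf_fm S \<phi>" "fv \<phi> \<subseteq> {..<k}"
    and Z_eq: "Z = {xs. length xs = k \<and> sat S (asg xs (\<lambda>_. undefined)) \<phi>}"
    using Z unfolding definable0_def by blast
  define shift where "shift = (\<lambda>i::nat. i + N)"
  have inj_shift: "inj shift" unfolding shift_def by (auto intro: injI)
  define eqs :: "('f, 'r) fm" where "eqs = conj_list (map (\<lambda>l. Eq (Var (N + l)) (Var (\<sigma> l))) [0..<k])"
  define \<theta> where "\<theta> = ex_block N k (Conj eqs (rename_fm shift \<phi>))"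
  have "fv (rename_fm shift \<phi>) \<subseteq> {N..<N + k}"
    unfolding fv_rename_fm[OF inj_shift] using \<phi>(2) by (auto simp: shift_def)
  then have fv_\<theta>: "fv \<theta> \<subseteq> {..<N}"
    using \<sigma> unfolding \<theta>_def eqs_def by (auto simp: fv_ex_block fv_conj_list)
  have sat_\<theta>: "sat S (asg ws v) \<theta> \<longleftrightarrow> map (\<lambda>l. ws ! \<sigma> l) [0..<k] \<in> Z"
    if ws: "length ws = N" for ws v
  proof -
    have conj: "sat S (override_block N us (asg ws v)) (Conj eqs (rename_fm shift \<phi>)) \<longleftrightarrow>
        us = map (\<lambda>l. ws ! \<sigma> l) [0..<k] \<and> us \<in> Z" if us: "length us = k" for us
    proof -
      let ?w = "override_block N us (asg ws v)"
      have "?w (N + l) = us ! l" "?w (\<sigma> l) = ws ! \<sigma> l" if "l < k" for l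
        using that us ws \<sigma>[OF that] by (auto simp: override_block_def asg_def)
      then have "sat S ?w eqs \<longleftrightarrow> (\<forall>l<k. us ! l = ws ! \<sigma> l)"
        by (auto simp: eqs_def sat_conj_list)
      also have "\<dots> \<longleftrightarrow> us = map (\<lambda>l. ws ! \<sigma> l) [0..<k]"
        using us by (auto simp: list_eq_iff_nth_eq)
      finally have "sat S ?w eqs \<longleftrightarrow> us = map (\<lambda>l. ws ! \<sigma> l) [0..<k]" .
      moreover have "sat S ?w (rename_fm shift \<phi>) \<longleftrightarrow> sat S (asg us (\<lambda>_. undefined)) \<phi>"
        unfolding sat_rename_fm[OF inj_shift]
        by (rule sat_cong) (use \<phi>(2) us in \<open>auto simp: override_block_def asg_def shift_def\<close>)
      ultimately show ?thesis using us Z_eq by simp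
    qed
    have "sat S (asg ws v) \<theta> \<longleftrightarrow> (\<exists>us. length us = k \<and> us = map (\<lambda>l. ws ! \<sigma> l) [0..<k] \<and> us \<in> Z)"
      unfolding \<theta>_def sat_ex_block using conj by (metis (no_types, lifting))
    then show ?thesis by auto
  qed
  show ?thesis
    unfolding definable0_def using \<phi>(1) fv_\<theta> sat_\<theta>
    by (intro exI[of _ \<theta>]) (auto simp: \<theta>_def eqs_def wf_ex_block wf_conj_list wf_rename_fm)
qed

lemma definable0_reindex_iff:
  assumes "definable0 S k Z" "\<And>l. l < k \<Longrightarrow> \<sigma> l < N"
  shows "definable0 S N {ws. length ws = N \<and> (map (\<lambda>l. ws ! \<sigma> l) [0..<k] \<in> Z \<longleftrightarrow> b)}"
proof (cases b)
  case False
  have "{ws. length ws = N \<and> (map (\<lambda>l. ws ! \<sigma> l) [0..<k] \<in> Z \<longleftrightarrow> b)} =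
      {ws. length ws = N \<and> ws \<notin> {ws. length ws = N \<and> map (\<lambda>l. ws ! \<sigma> l) [0..<k] \<in> Z}}"
    using False by auto
  then show ?thesis using definable0_compl[OF definable0_reindex[OF assms]] by simp
qed (use definable0_reindex[OF assms] in simp)

lemma definable_fix_params:
  assumes "definable0 S (n + k) X" "length ds = k"
  shows "definable S n {xs. xs @ ds \<in> X}"
proof -
  obtain \<phi> where \<phi>: "wf_fm S \<phi>" "fv \<phi> \<subseteq> {..<n + k}"
    and X: "X = {xs. length xs = n + k \<and> sat S (asg xs (\<lambda>_. undefined)) \<phi>}"
    using assms(1) unfolding definable0_def by blast
  define v where "v = (\<lambda>i. if n \<le> i \<and> i < n + k then ds ! (i - n) else undefined)"
  have "sat S (asg xs v) \<phi> = sat S (asg (xs @ ds) (\<lambda>_. undefined)) \<phi>" if "length xs = n" for xs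
    by (rule sat_cong) (use \<phi>(2) that assms(2) in \<open>auto simp: asg_def v_def nth_append\<close>)
  then have "{xs. xs @ ds \<in> X} = {xs. length xs = n \<and> sat S (asg xs v) \<phi>}"
    using X assms(2) by auto
  then show ?thesis unfolding definable_def using \<phi>(1) by blast
qed

lemma definable0_halves_eq:
  fixes S :: "('a, 'f, 'r, 'z) struc_scheme"
  shows "definable0 S (2 * m) {xs. length xs = 2 * m \<and> take m xs = drop m xs}"
proof -
  define \<phi> :: "('f, 'r) fm" where "\<phi> = conj_list (map (\<lambda>l. Eq (Var l) (Var (m + l))) [0..<m])"
  have "take m xs = drop m xs \<longleftrightarrow> sat S (asg xs v) \<phi>" if "length xs = 2 * m" for xs :: "'a list" and v
    using that by (auto simp: \<phi>_def sat_conj_list asg_def list_eq_iff_nth_eq)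
  then have "{xs. length xs = 2 * m \<and> take m xs = drop m xs} =
      {xs. length xs = 2 * m \<and> sat S (asg xs (\<lambda>_. undefined)) \<phi>}"
    by blast
  moreover have "definable0 S (2 * m) {xs. length xs = 2 * m \<and> sat S (asg xs (\<lambda>_. undefined)) \<phi>}"
    by (rule definable0_formula) (auto simp: \<phi>_def wf_conj_list fv_conj_list)
  ultimately show ?thesis by simp
qed

section \<open>Realising types in \<open>\<aleph>\<^sub>1\<close>-saturated structures\<close>

lemma definable0_last_to_front:
  fixes S :: "('a, 'f, 'r, 'z) struc_scheme"
  assumes "definable0 S (Suc k) D"
  shows "\<exists>\<phi>. wf_fm S \<phi> \<and>
    (\<forall>c cs. length cs = k \<longrightarrow> (sat S (asg (c # cs) (\<lambda>_. undefined)) \<phi> \<longleftrightarrow> cs @ [c] \<in> D))"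
proof -
  define \<sigma> where "\<sigma> = (\<lambda>l. if l < k then Suc l else 0)"
  have rotate: "map (\<lambda>l. (c # cs) ! \<sigma> l) [0..<Suc k] = cs @ [c]" if "length cs = k" for c cs
    using that by (intro nth_equalityI) (auto simp: \<sigma>_def nth_append)
  have "definable0 S (Suc k) {zs. length zs = Suc k \<and> map (\<lambda>l. zs ! \<sigma> l) [0..<Suc k] \<in> D}"
    by (rule definable0_reindex[OF assms]) (auto simp: \<sigma>_def)
  then obtain \<phi> where "wf_fm S \<phi>" and eq:
    "{zs. length zs = Suc k \<and> map (\<lambda>l. zs ! \<sigma> l) [0..<Suc k] \<in> D} =
      {zs. length zs = Suc k \<and> sat S (asg zs (\<lambda>_. undefined)) \<phi>}"
    unfolding definable0_def by blast
  moreover have "sat S (asg (c # cs) (\<lambda>_. undefined)) \<phi> \<longleftrightarrow> cs @ [c] \<in> D"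
    if "length cs = k" for c cs
  proof -
    have "c # cs \<in> {zs. length zs = Suc k \<and> map (\<lambda>l. zs ! \<sigma> l) [0..<Suc k] \<in> D} \<longleftrightarrow>
        c # cs \<in> {zs. length zs = Suc k \<and> sat S (asg zs (\<lambda>_. undefined)) \<phi>}"
      by (simp only: eq)
    then show ?thesis
      unfolding mem_Collect_eq rotate[OF that] using that by simp
  qed
  ultimately show ?thesis by blast
qed

text \<open>Only the parameters have to form a countable set, so the family \<open>\<D>\<close> is arbitrary.\<close>
lemma saturated_extend_tuple:
  fixes M :: "('a, 'f, 'r, 'z) struc_scheme"
  assumes sat: "aleph1_saturated M"
    and def: "\<And>D. D \<in> \<D> \<Longrightarrow> definable0 M (Suc k) D" and cs: "length cs = k"
    and fin: "\<And>F. F \<subseteq> \<D> \<Longrightarrow> finite F \<Longrightarrow> \<exists>c. \<forall>D\<in>F. cs @ [c] \<in> D"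
  shows "\<exists>c. \<forall>D\<in>\<D>. cs @ [c] \<in> D"
proof -
  define P where "P = (\<lambda>D \<phi>. wf_fm M \<phi> \<and> (\<forall>c cs. length cs = k \<longrightarrow>
      (sat M (asg (c # cs) (\<lambda>_. undefined)) \<phi> \<longleftrightarrow> cs @ [c] \<in> D)))"
  define \<phi> where "\<phi> = (\<lambda>D. SOME \<phi>. P D \<phi>)"
  have P: "P D (\<phi> D)" if "D \<in> \<D>" for D
    unfolding \<phi>_def P_def by (rule someI_ex) (rule definable0_last_to_front[OF def[OF that]])
  have \<phi>: "wf_fm M (\<phi> D)"
    "sat M (asg (c # cs) (\<lambda>_. undefined)) (\<phi> D) \<longleftrightarrow> cs @ [c] \<in> D" if "D \<in> \<D>" for D c
    using P[OF that] cs unfolding P_def by simp_all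
  define w where "w = asg (undefined # cs) (\<lambda>_::nat. undefined :: 'a)"
  have w_upd: "w(0 := c) = asg (c # cs) (\<lambda>_. undefined)" for c
    unfolding w_def by (auto simp: asg_def fun_eq_iff nth_Cons')
  define \<Phi> where "\<Phi> = (\<lambda>D. (\<phi> D, w)) ` \<D>"
  have countable: "countable (insert undefined (set cs))"
    by (simp add: countable_finite)
  have params: "\<forall>(\<psi>, w') \<in> \<Phi>. wf_fm M \<psi> \<and> (\<forall>i. i \<noteq> 0 \<longrightarrow> w' i \<in> insert undefined (set cs))"
    using \<phi>(1) by (auto simp: \<Phi>_def w_def asg_def nth_Cons')
  have finite_sat: "\<exists>c. \<forall>(\<psi>, w') \<in> F. sat M (w'(0 := c)) \<psi>" if F: "F \<subseteq> \<Phi>" "finite F" for F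
  proof -
    obtain F' where F': "F' \<subseteq> \<D>" "finite F'" "F = (\<lambda>D. (\<phi> D, w)) ` F'"
      using finite_subset_image[OF F(2) F(1)[unfolded \<Phi>_def]] by blast
    then obtain c where "\<forall>D\<in>F'. cs @ [c] \<in> D" using fin by blast
    then show ?thesis using F' \<phi>(2) by (intro exI[of _ c]) (auto simp: w_upd)
  qed
  obtain c where "\<forall>(\<psi>, w') \<in> \<Phi>. sat M (w'(0 := c)) \<psi>"
    using sat[unfolded aleph1_saturated_def, rule_format, OF countable params[rule_format] finite_sat]
    by blast
  then show ?thesis using \<phi>(2) by (intro exI[of _ c]) (auto simp: \<Phi>_def w_upd)
qed

lemma definable0_prefixes:
  fixes S :: "('a, 'f, 'r, 'z) struc_scheme"
  assumes def: "\<And>K. K \<in> I \<Longrightarrow> definable0 S (N K) (T K)" and I: "finite I"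
  shows "definable0 S n {zs. \<exists>c. map c [0..<n] = zs \<and> (\<forall>K\<in>I. map c [0..<N K] \<in> T K)}"
proof -
  define N' where "N' = max n (Max (insert 0 (N ` I)))"
  have N_le: "N K \<le> N'" if "K \<in> I" for K
  proof -
    have "N K \<le> Max (insert 0 (N ` I))" using that I by (intro Max_ge) auto
    then show ?thesis by (simp add: N'_def)
  qed
  define W where "W = {ws. length ws = N'} \<inter>
      (\<Inter>K\<in>I. {ws. length ws = N' \<and> map (\<lambda>l. ws ! l) [0..<N K] \<in> T K})"
  have "definable0 S N' W"
    unfolding W_def using N_le by (intro definable0_INT I definable0_reindex def) (auto intro: less_le_trans)
  then have "definable0 S n {zs. \<exists>ys. length ys = N' - n \<and> zs @ ys \<in> W}"
    by (intro definable0_project) (simp add: N'_def)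
  moreover have "{zs. \<exists>c. map c [0..<n] = zs \<and> (\<forall>K\<in>I. map c [0..<N K] \<in> T K)} =
      {zs. \<exists>ys. length ys = N' - n \<and> zs @ ys \<in> W}"
  proof (intro set_eqI iffI; clarsimp)
    fix c assume c: "\<forall>K\<in>I. map c [0..<N K] \<in> T K"
    have "[0..<n] @ [n..<N'] = [0..<N']"
      using upt_add_eq_append[of 0 n "N' - n"] by (simp add: N'_def)
    then have "map c [0..<n] @ map c [n..<N'] = map c [0..<N']"
      by (metis map_append)
    moreover have "map c [0..<N'] \<in> W"
      unfolding W_def
    proof (simp, intro ballI)
      fix K assume K: "K \<in> I"
      have eq: "map (\<lambda>l. map c [0..<N'] ! l) [0..<N K] = map c [0..<N K]"
        using N_le[OF K] by (intro map_cong) auto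
      show "map (\<lambda>l. map c [0..<N'] ! l) [0..<N K] \<in> T K"
        unfolding eq using c K by blast
    qed
    ultimately show "\<exists>ys. length ys = N' - n \<and> map c [0..<n] @ ys \<in> W"
      by (intro exI[of _ "map c [n..<N']"]) (simp add: N'_def)
  next
    fix zs ys assume ys: "length ys = N' - n" "zs @ ys \<in> W"
    have "n \<le> N'" by (simp add: N'_def)
    moreover have "length zs + length ys = N'" using ys(2) by (simp add: W_def)
    ultimately have "length zs = n" using ys(1) by linarith
    moreover have "map (\<lambda>l. (zs @ ys) ! l) [0..<N K] \<in> T K" if "K \<in> I" for K
      using ys that by (simp add: W_def)
    ultimately show "\<exists>c. map c [0..<n] = zs \<and> (\<forall>K\<in>I. map c [0..<N K] \<in> T K)"
      by (intro exI[of _ "\<lambda>l. (zs @ ys) ! l"]) (auto intro: nth_equalityI simp: nth_append)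
  qed
  ultimately show ?thesis by simp
qed

lemma sequence_from_extensions:
  assumes "P []" "\<And>cs. P cs \<Longrightarrow> \<exists>x. P (cs @ [x])"
  shows "\<exists>c. \<forall>n. P (map c [0..<n])"
proof -
  have "\<exists>f. \<forall>n. (length (f n) = n \<and> P (f n)) \<and> (\<exists>x. f (Suc n) = f n @ [x])"
    using assms by (intro dependent_nat_choice) force+
  then obtain f where f: "\<And>n. length (f n) = n \<and> P (f n)" "\<And>n. \<exists>x. f (Suc n) = f n @ [x]"
    by blast
  define c where "c = (\<lambda>n. last (f (Suc n)))"
  have "f n = map c [0..<n]" for n
  proof (induction n)
    case 0 then show ?case using f(1)[of 0] by simp
  next
    case (Suc n) then show ?case using f(2)[of n] by (auto simp: c_def)
  qed
  then show ?thesis using f(1) by metis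
qed

lemma saturated_realize_sequence:
  fixes M :: "('a, 'f, 'r, 'z) struc_scheme" and N :: "nat \<Rightarrow> nat"
  assumes sat: "aleph1_saturated M"
    and def: "\<And>K. definable0 M (N K) (T K)"
    and fin: "\<And>K. \<exists>c. \<forall>K'\<le>K. map c [0..<N K'] \<in> T K'"
  shows "\<exists>c. \<forall>K. map c [0..<N K] \<in> T K"
proof -
  define D where "D = (\<lambda>n K. {zs. \<exists>c. map c [0..<n] = zs \<and> (\<forall>K'\<in>{..K}. map c [0..<N K'] \<in> T K')})"
  define extendable where "extendable = (\<lambda>cs. \<forall>K. cs \<in> D (length cs) K)"
  have D_antimono: "D n K \<subseteq> D n K'" if "K' \<le> K" for n K K'
  proof
    fix zs assume "zs \<in> D n K"
    then obtain c where "map c [0..<n] = zs" "\<forall>K''\<in>{..K}. map c [0..<N K''] \<in> T K''"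
      unfolding D_def by blast
    moreover have "\<forall>K''\<in>{..K'}. map c [0..<N K''] \<in> T K''"
    proof
      fix K'' assume "K'' \<in> {..K'}"
      then have "K'' \<in> {..K}" using that by simp
      then show "map c [0..<N K''] \<in> T K''" using calculation(2) by blast
    qed
    ultimately show "zs \<in> D n K'"
      unfolding D_def by blast
  qed
  have "extendable []"
    using fin by (simp add: extendable_def D_def Ball_def atMost_iff)
  moreover have "\<exists>x. extendable (cs @ [x])" if cs: "extendable cs" for cs
  proof -
    have "\<exists>x. \<forall>D'\<in>range (D (Suc (length cs))). cs @ [x] \<in> D'"
    proof (rule saturated_extend_tuple[OF sat _ refl])
      show "definable0 M (Suc (length cs)) D'" if "D' \<in> range (D (Suc (length cs)))" for D'
        using that unfolding D_def by (auto intro!: definable0_prefixes def simp del: upt_Suc)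
      fix F assume F: "F \<subseteq> range (D (Suc (length cs)))" "finite F"
      then obtain Ks where Ks: "finite Ks" "F = D (Suc (length cs)) ` Ks"
        by (metis finite_subset_image subset_UNIV)
      obtain c where c: "map c [0..<length cs] = cs" "\<forall>K'\<in>{..Max (insert 0 Ks)}. map c [0..<N K'] \<in> T K'"
        using cs unfolding extendable_def D_def by blast
      then have "cs @ [c (length cs)] \<in> D (Suc (length cs)) (Max (insert 0 Ks))"
        unfolding D_def by (intro CollectI exI[of _ c]) auto
      moreover have "K \<le> Max (insert 0 Ks)" if "K \<in> Ks" for K
        using Ks(1) that by simp
      ultimately show "\<exists>x. \<forall>D'\<in>F. cs @ [x] \<in> D'"
        using D_antimono Ks(2) by (intro exI[of _ "c (length cs)"]) blast
    qed
    then show ?thesis unfolding extendable_def by auto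
  qed
  ultimately obtain c where c: "\<And>n. extendable (map c [0..<n])"
    using sequence_from_extensions[of extendable] by blast
  show ?thesis
  proof (intro exI allI)
    fix K
    have "map c [0..<N K] \<in> D (N K) K"
      using c[of "N K"] unfolding extendable_def by simp
    then obtain c' where "map c' [0..<N K] = map c [0..<N K]" "\<forall>K'\<in>{..K}. map c' [0..<N K'] \<in> T K'"
      unfolding D_def by blast
    then show "map c [0..<N K] \<in> T K" by (metis atMost_iff order_refl)
  qed
qed

lemma block_index_less:
  fixes i K l L :: nat
  assumes "i < K" "l < L"
  shows "i * L + l < K * L"
proof -
  have "i * L + l < Suc i * L" using assms(2) by simp
  also have "\<dots> \<le> K * L" using assms(1) by (intro mult_le_mono1) simp
  finally show ?thesis .
qed

lemma saturated_realize_pattern: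
  fixes M :: "('a, 'f, 'r, 'z) struc_scheme" and R :: "nat \<Rightarrow> nat \<Rightarrow> bool"
  assumes sat: "aleph1_saturated M" and wf: "wf_fm M \<phi>" and fv: "fv \<phi> \<subseteq> {..<p + q}"
    and fin: "\<And>K. \<exists>a b. (\<forall>i. length (a i) = p \<and> length (b i) = q) \<and>
      (\<forall>i<K. \<forall>j<K. sat M (asg (a i @ b j) (\<lambda>_. undefined)) \<phi> \<longleftrightarrow> R i j)"
  shows "\<exists>a b. (\<forall>i. length (a i) = p \<and> length (b i) = q) \<and>
      (\<forall>i j. sat M (asg (a i @ b j) (\<lambda>_. undefined)) \<phi> \<longleftrightarrow> R i j)"
proof -
  define L where "L = p + q"
  define \<sigma> where "\<sigma> = (\<lambda>i j l. if l < p then i * L + l else j * L + l)"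
  define left where "left = (\<lambda>(c :: nat \<Rightarrow> 'a) i. map (\<lambda>l. c (i * L + l)) [0..<p])"
  define right where "right = (\<lambda>(c :: nat \<Rightarrow> 'a) j. map (\<lambda>l. c (j * L + (p + l))) [0..<q])"
  define Z where "Z = {xs. length xs = L \<and> sat M (asg xs (\<lambda>_. undefined)) \<phi>}"
  define T where "T = (\<lambda>K. {ws. length ws = K * L \<and>
      (\<forall>i<K. \<forall>j<K. map (\<lambda>l. ws ! \<sigma> i j l) [0..<L] \<in> Z \<longleftrightarrow> R i j)})"
  have \<sigma>_bound: "\<sigma> i j l < K * L" if "i < K" "j < K" "l < L" for i j l K
    using block_index_less[OF that(1,3)] block_index_less[OF that(2,3)] by (simp add: \<sigma>_def)
  have pair: "map (\<lambda>l. map c [0..<K * L] ! \<sigma> i j l) [0..<L] = left c i @ right c j"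
    if "i < K" "j < K" for c i j K
  proof -
    have "map (\<lambda>l. map c [0..<K * L] ! \<sigma> i j l) [0..<L] = map (\<lambda>l. c (\<sigma> i j l)) [0..<L]"
      using \<sigma>_bound[OF that] by simp
    also have "\<dots> = left c i @ right c j"
      by (intro nth_equalityI) (auto simp: left_def right_def \<sigma>_def L_def nth_append)
    finally show ?thesis .
  qed
  have "definable0 M (K * L) (T K)" for K
  proof -
    have "definable0 M L Z"
      unfolding Z_def by (rule definable0_formula[OF wf]) (use fv in \<open>simp add: L_def\<close>)
    then have "definable0 M (K * L) ({ws. length ws = K * L} \<inter> (\<Inter>(i, j)\<in>{..<K} \<times> {..<K}.
        {ws. length ws = K * L \<and> (map (\<lambda>l. ws ! \<sigma> i j l) [0..<L] \<in> Z \<longleftrightarrow> R i j)}))"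
      using \<sigma>_bound by (intro definable0_INT) (auto intro!: definable0_reindex_iff)
    moreover have "{ws. length ws = K * L} \<inter> (\<Inter>(i, j)\<in>{..<K} \<times> {..<K}.
        {ws. length ws = K * L \<and> (map (\<lambda>l. ws ! \<sigma> i j l) [0..<L] \<in> Z \<longleftrightarrow> R i j)}) = T K"
      by (auto simp: T_def)
    ultimately show ?thesis by simp
  qed
  moreover have "\<exists>c. \<forall>K'\<le>K. map c [0..<K' * L] \<in> T K'" for K
  proof -
    obtain a b where ab: "\<forall>i. length (a i) = p \<and> length (b i) = q"
      "\<forall>i<K. \<forall>j<K. sat M (asg (a i @ b j) (\<lambda>_. undefined)) \<phi> \<longleftrightarrow> R i j"
      using fin by blast
    define c where "c = (\<lambda>n. (a (n div L) @ b (n div L)) ! (n mod L))"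
    have "left c = a" "right c = b"
      using ab(1) by (auto simp: fun_eq_iff left_def right_def c_def L_def nth_append intro!: nth_equalityI)
    then show ?thesis
      using ab pair by (intro exI[of _ c]) (auto simp: T_def Z_def L_def)
  qed
  ultimately obtain c where c: "\<And>K. map c [0..<K * L] \<in> T K"
    using saturated_realize_sequence[OF sat, of "\<lambda>K. K * L" T] by blast
  have "sat M (asg (left c i @ right c j) (\<lambda>_. undefined)) \<phi> \<longleftrightarrow> R i j" for i j
  proof -
    define K where "K = Suc (max i j)"
    have ij: "i < K" "j < K" by (auto simp: K_def)
    then have "map (\<lambda>l. map c [0..<K * L] ! \<sigma> i j l) [0..<L] \<in> Z \<longleftrightarrow> R i j"
      using c[of K] unfolding T_def by blast
    then show ?thesis
      unfolding pair[OF ij] Z_def by (simp add: left_def right_def L_def)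
  qed
  then show ?thesis
    by (intro exI[of _ "left c"] exI[of _ "right c"]) (auto simp: left_def right_def)
qed

section \<open>Ultrahomogeneous binary relations\<close>

definition partial_iso :: "('b \<Rightarrow> 'b \<Rightarrow> bool) \<Rightarrow> 'b set \<Rightarrow> ('b \<Rightarrow> 'b) \<Rightarrow> bool" where
  "partial_iso R A f \<longleftrightarrow> finite A \<and> inj_on f A \<and> (\<forall>x\<in>A. \<forall>y\<in>A. R x y \<longleftrightarrow> R (f x) (f y))"

definition ultrahomogeneous :: "('b \<Rightarrow> 'b \<Rightarrow> bool) \<Rightarrow> bool" where
  "ultrahomogeneous R \<longleftrightarrow> (\<forall>A f. partial_iso R A f \<longrightarrow>
     (\<exists>g. bij g \<and> (\<forall>x y. R x y \<longleftrightarrow> R (g x) (g y)) \<and> (\<forall>x\<in>A. g x = f x)))"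

lemma partial_iso_inv: "partial_iso R A f \<Longrightarrow> partial_iso R (f ` A) (inv_into A f)"
  unfolding partial_iso_def by (auto simp: inj_on_inv_into inv_into_f_f)

locale one_point_extension =
  fixes R :: "'b::countable \<Rightarrow> 'b \<Rightarrow> bool"
  assumes extend: "\<And>A f x. partial_iso R A f \<Longrightarrow> x \<notin> A \<Longrightarrow> \<exists>y. partial_iso R (insert x A) (f(x := y))"
begin

lemma extend_domain: "partial_iso R A f \<Longrightarrow> \<exists>f'. partial_iso R (insert x A) f' \<and> (\<forall>a\<in>A. f' a = f a)"
  using extend[of A f x] by (cases "x \<in> A") (auto simp: insert_absorb)

lemma extend_range:
  assumes f: "partial_iso R A f"
  shows "\<exists>A' f'. partial_iso R A' f' \<and> A \<subseteq> A' \<and> (\<forall>a\<in>A. f' a = f a) \<and> y \<in> f' ` A'"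
proof -
  obtain k where k: "partial_iso R (insert y (f ` A)) k" "\<forall>b\<in>f ` A. k b = inv_into A f b"
    using extend_domain[OF partial_iso_inv[OF f]] by blast
  have inj_f: "inj_on f A" and inj_k: "inj_on k (insert y (f ` A))"
    using f k(1) unfolding partial_iso_def by auto
  have kf: "k (f a) = a" if "a \<in> A" for a
    using k(2) that inj_f by simp
  define f' where "f' = inv_into (insert y (f ` A)) k"
  have "partial_iso R (k ` insert y (f ` A)) f'"
    unfolding f'_def by (rule partial_iso_inv[OF k(1)])
  moreover have "A \<subseteq> k ` insert y (f ` A)"
  proof
    fix a assume "a \<in> A"
    then have "k (f a) \<in> k ` insert y (f ` A)" by blast
    then show "a \<in> k ` insert y (f ` A)" using kf[OF \<open>a \<in> A\<close>] by simp
  qed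
  moreover have "f' a = f a" if "a \<in> A" for a
  proof -
    have "f' (k (f a)) = f a" unfolding f'_def using inj_k that by (simp add: inv_into_f_f)
    then show ?thesis using kf[OF that] by simp
  qed
  moreover have "y \<in> f' ` k ` insert y (f ` A)"
    using inj_k unfolding f'_def by (simp add: inv_into_f_f)
  ultimately show ?thesis by blast
qed

lemma extend_domain_range:
  assumes "partial_iso R A f"
  shows "\<exists>A' f'. partial_iso R A' f' \<and> A \<subseteq> A' \<and> (\<forall>a\<in>A. f' a = f a) \<and> x \<in> A' \<and> y \<in> f' ` A'"
proof -
  obtain f1 where f1: "partial_iso R (insert x A) f1" "\<forall>a\<in>A. f1 a = f a"
    using extend_domain[OF assms] by blast
  obtain A' f' where "partial_iso R A' f'" "insert x A \<subseteq> A'"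
    "\<forall>a\<in>insert x A. f' a = f1 a" "y \<in> f' ` A'"
    using extend_range[OF f1(1), of y] by (elim exE conjE)
  moreover have "\<forall>a\<in>A. f' a = f a" using calculation(3) f1(2) by simp
  ultimately show ?thesis by blast
qed

text \<open>Enumerating the countable universe, alternately add the next element to the domain
  and to the range of a chain of finite partial isomorphisms; their union is an automorphism.\<close>
lemma partial_iso_chain:
  assumes f: "partial_iso R A f"
  obtains B h where "\<And>n. partial_iso R (B n) (h n)" "A \<subseteq> B 0" "\<And>a. a \<in> A \<Longrightarrow> h 0 a = f a"
    "\<And>n m. n \<le> m \<Longrightarrow> B n \<subseteq> B m \<and> (\<forall>a\<in>B n. h m a = h n a)"
    "\<And>x. x \<in> B (Suc (to_nat x))" "\<And>y. y \<in> h (Suc (to_nat y)) ` B (Suc (to_nat y))"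
proof -
  define P where "P = (\<lambda>(B, h). partial_iso R B h \<and> A \<subseteq> B \<and> (\<forall>a\<in>A. h a = f a))"
  define Q where "Q = (\<lambda>n (B, h) (B' :: 'b set, h' :: 'b \<Rightarrow> 'b). B \<subseteq> B' \<and> (\<forall>a\<in>B. h' a = h a) \<and>
      from_nat n \<in> B' \<and> from_nat n \<in> h' ` B')"
  have "\<exists>s. \<forall>n. P (s n) \<and> Q n (s n) (s (Suc n))"
  proof (rule dependent_nat_choice)
    show "\<exists>q. P q" using f by (intro exI[of _ "(A, f)"]) (simp add: P_def)
  next
    fix q n assume "P q"
    then obtain B h where q: "q = (B, h)" "partial_iso R B h" "A \<subseteq> B" "\<forall>a\<in>A. h a = f a"
      unfolding P_def by (cases q) auto
    then obtain B' h' where "partial_iso R B' h'" "B \<subseteq> B'" "\<forall>a\<in>B. h' a = h a"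
      "from_nat n \<in> B'" "from_nat n \<in> h' ` B'"
      using extend_domain_range[of B h "from_nat n" "from_nat n"] by blast
    then show "\<exists>q'. P q' \<and> Q n q q'"
      using q by (intro exI[of _ "(B', h')"]) (auto simp: P_def Q_def)
  qed
  then obtain s where s: "\<And>n. P (s n)" "\<And>n. Q n (s n) (s (Suc n))" by blast
  define B where "B = (\<lambda>n. fst (s n))"
  define h where "h = (\<lambda>n. snd (s n))"
  have iso: "partial_iso R (B n) (h n)" and init: "A \<subseteq> B 0" "\<forall>a\<in>A. h 0 a = f a"
    and grow: "B n \<subseteq> B (Suc n)" "\<forall>a\<in>B n. h (Suc n) a = h n a"
    and cover: "from_nat n \<in> B (Suc n)" "from_nat n \<in> h (Suc n) ` B (Suc n)" for n
    using s[of n] s[of 0] unfolding B_def h_def P_def Q_def by (auto split: prod.splits)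
  have mono: "B n \<subseteq> B m \<and> (\<forall>a\<in>B n. h m a = h n a)" if "n \<le> m" for n m
    using that
  proof (induction m rule: dec_induct)
    case (step m)
    then show ?case using grow[of m] by auto
  qed simp
  show ?thesis
  proof (rule that)
    show "partial_iso R (B n) (h n)" for n by (rule iso)
    show "A \<subseteq> B 0" by (fact init(1))
    show "h 0 a = f a" if "a \<in> A" for a using init(2) that by blast
    show "n \<le> m \<Longrightarrow> B n \<subseteq> B m \<and> (\<forall>a\<in>B n. h m a = h n a)" for n m by (rule mono)
    show "x \<in> B (Suc (to_nat x))" "x \<in> h (Suc (to_nat x)) ` B (Suc (to_nat x))" for x
      using cover[of "to_nat x"] by simp_all
  qed
qed

theorem ultrahomogeneous: "ultrahomogeneous R"
  unfolding ultrahomogeneous_def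
proof (intro allI impI)
  fix A f assume f: "partial_iso R A f"
  obtain B h where iso: "\<And>n. partial_iso R (B n) (h n)" and init: "A \<subseteq> B 0" "\<And>a. a \<in> A \<Longrightarrow> h 0 a = f a"
    and mono: "\<And>n m. n \<le> m \<Longrightarrow> B n \<subseteq> B m \<and> (\<forall>a\<in>B n. h m a = h n a)"
    and cover: "\<And>x. x \<in> B (Suc (to_nat x))" "\<And>y. y \<in> h (Suc (to_nat y)) ` B (Suc (to_nat y))"
    using partial_iso_chain[OF f] by blast
  define g where "g = (\<lambda>x. h (Suc (to_nat x)) x)"
  have g_eq: "g x = h m x" if "x \<in> B m" for x m
    using mono[of "Suc (to_nat x)" "max (Suc (to_nat x)) m"] mono[of m "max (Suc (to_nat x)) m"]
      cover(1)[of x] that unfolding g_def by auto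
  have common: "\<exists>m. x \<in> B m \<and> y \<in> B m" for x y
    using mono[of "Suc (to_nat x)" "max (Suc (to_nat x)) (Suc (to_nat y))"]
      mono[of "Suc (to_nat y)" "max (Suc (to_nat x)) (Suc (to_nat y))"] cover(1)[of x] cover(1)[of y]
    by auto
  have "R x y \<longleftrightarrow> R (g x) (g y)" for x y
  proof -
    obtain m where "x \<in> B m" "y \<in> B m" using common by blast
    then show ?thesis using iso[of m] g_eq unfolding partial_iso_def by simp
  qed
  moreover have "inj g"
  proof (rule injI)
    fix x y assume "g x = g y"
    obtain m where "x \<in> B m" "y \<in> B m" using common by blast
    then show "x = y"
      using iso[of m] g_eq \<open>g x = g y\<close> unfolding partial_iso_def inj_on_def by simp
  qed
  moreover have "surj g"
  proof -
    have "y \<in> range g" for y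
    proof -
      obtain a where "a \<in> B (Suc (to_nat y))" "y = h (Suc (to_nat y)) a"
        using cover(2)[of y] by auto
      then have "y = g a" using g_eq by simp
      then show ?thesis by simp
    qed
    then show ?thesis by blast
  qed
  moreover have "\<forall>x\<in>A. g x = f x"
    using g_eq[of _ 0] init by auto
  ultimately show "\<exists>g. bij g \<and> (\<forall>x y. R x y \<longleftrightarrow> R (g x) (g y)) \<and> (\<forall>x\<in>A. g x = f x)"
    by (auto simp: bij_def)
qed

end

section \<open>Trace definability of ultrahomogeneous binary structures\<close>

definition automorphism :: "('b, 'g, 's, 'y) struc_scheme \<Rightarrow> ('b \<Rightarrow> 'b) \<Rightarrow> bool" where
  "automorphism S g \<longleftrightarrow> bij g \<and>
     (\<forall>f\<in>fsyms S. \<forall>xs. length xs = farity S f \<longrightarrow> finterp S f (map g xs) = g (finterp S f xs)) \<and>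
     (\<forall>r\<in>rsyms S. \<forall>xs. length xs = rarity S r \<longrightarrow> rinterp S r (map g xs) = rinterp S r xs)"

lemma eval_trm_automorphism:
  assumes "automorphism S g"
  shows "wf_trm S t \<Longrightarrow> eval_trm S (\<lambda>i. g (w i)) t = g (eval_trm S w t)"
proof (induction t)
  case (Fn f ts)
  then have "map (eval_trm S (\<lambda>i. g (w i))) ts = map g (map (eval_trm S w) ts)" by simp
  then show ?case using Fn.prems assms unfolding automorphism_def by (simp del: map_map)
qed simp

lemma sat_automorphism:
  assumes g: "automorphism S g"
  shows "wf_fm S \<phi> \<Longrightarrow> sat S (\<lambda>i. g (w i)) \<phi> = sat S w \<phi>"
proof (induction \<phi> arbitrary: w)
  case (Eq t u)
  moreover have "inj g" using g by (simp add: automorphism_def bij_def)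
  ultimately show ?case by (simp add: eval_trm_automorphism[OF g] inj_eq)
next
  case (Rel r ts)
  then have "map (eval_trm S (\<lambda>i. g (w i))) ts = map g (map (eval_trm S w) ts)"
    by (simp add: eval_trm_automorphism[OF g])
  then show ?case using Rel.prems g unfolding automorphism_def by (simp del: map_map)
next
  case (Neg \<phi>)
  then show ?case by simp
next
  case (Conj \<phi> \<psi>)
  then show ?case by simp
next
  case (Ex x \<phi>)
  have upd: "(\<lambda>i. g (w i))(x := g a) = (\<lambda>i. g ((w(x := a)) i))" for a by (auto simp: fun_eq_iff)
  have "(\<exists>a. sat S ((\<lambda>i. g (w i))(x := a)) \<phi>) \<longleftrightarrow> (\<exists>a. sat S ((\<lambda>i. g (w i))(x := g a)) \<phi>)"
    using g unfolding automorphism_def by (metis bij_pointE)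
  also have "\<dots> \<longleftrightarrow> (\<exists>a. sat S (w(x := a)) \<phi>)"
  proof -
    have "sat S (\<lambda>i. g ((w(x := a)) i)) \<phi> = sat S (w(x := a)) \<phi>" for a
      by (rule Ex.IH) (use Ex.prems in simp)
    then show ?thesis unfolding upd by (simp only:)
  qed
  finally show ?case by simp
qed simp

definition binary_struc :: "('b, 'g, unit, 'y) struc_scheme \<Rightarrow> ('b \<Rightarrow> 'b \<Rightarrow> bool) \<Rightarrow> bool" where
  "binary_struc S R \<longleftrightarrow> fsyms S = {} \<and> rsyms S = {()} \<and> rarity S () = 2 \<and>
     (\<forall>xs. rinterp S () xs = R (xs ! 0) (xs ! 1))"

lemma binary_struc_rat_order: "binary_struc rat_order (<)"
  by (simp add: binary_struc_def rat_order_def)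

lemma binary_struc_graph_struc: "binary_struc (graph_struc E) E"
  by (simp add: binary_struc_def graph_struc_def)

lemma binary_struc_definable:
  assumes "binary_struc S R"
  shows "definable S 2 {xs. length xs = 2 \<and> R (xs ! 0) (xs ! 1)}"
  unfolding definable_def
proof (intro exI conjI)
  show "wf_fm S (Rel () [Var 0, Var 1])" using assms by (simp add: binary_struc_def)
  show "{xs. length xs = 2 \<and> R (xs ! 0) (xs ! 1)} =
      {xs. length xs = 2 \<and> sat S (asg xs undefined) (Rel () [Var 0, Var 1])}"
    using assms by (auto simp: binary_struc_def asg_def)
qed

lemma automorphism_binary_struc:
  assumes "binary_struc S R" "bij g" "\<And>x y. R x y \<longleftrightarrow> R (g x) (g y)"
  shows "automorphism S g"
proof -
  have "rinterp S () (map g xs) = rinterp S () xs" if "length xs = 2" for xs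
    using that assms(1,3) by (simp add: binary_struc_def)
  then show ?thesis using assms(1,2) by (auto simp: automorphism_def binary_struc_def)
qed

definition qf_type :: "('b \<Rightarrow> 'b \<Rightarrow> bool) \<Rightarrow> 'b list \<Rightarrow> (bool \<times> bool) list" where
  "qf_type R ys = map (\<lambda>(i, j). (R (ys ! i) (ys ! j), ys ! i = ys ! j))
     (List.product [0..<length ys] [0..<length ys])"

lemma qf_type_eq_iff:
  assumes "length ys = length ys'"
  shows "qf_type R ys = qf_type R' ys' \<longleftrightarrow> (\<forall>i<length ys. \<forall>j<length ys.
    (R (ys ! i) (ys ! j) \<longleftrightarrow> R' (ys' ! i) (ys' ! j)) \<and> (ys ! i = ys ! j \<longleftrightarrow> ys' ! i = ys' ! j))"
  using assms unfolding qf_type_def by (auto simp: map_eq_conv)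

lemma qf_type_map:
  assumes "inj f" "\<And>u v. R' (f u) (f v) \<longleftrightarrow> R u v"
  shows "qf_type R' (map f ys) = qf_type R ys"
  using assms by (simp add: qf_type_eq_iff inj_eq)

lemma finite_qf_types: "finite (qf_type R ` {ys. length ys = L})"
proof (rule finite_subset)
  show "qf_type R ` {ys. length ys = L} \<subseteq> {\<pi>. set \<pi> \<subseteq> UNIV \<and> length \<pi> = L * L}"
    by (auto simp: qf_type_def)
  show "finite {\<pi> :: (bool \<times> bool) list. set \<pi> \<subseteq> UNIV \<and> length \<pi> = L * L}"
    by (rule finite_lists_length_eq) simp
qed

lemma qf_type_partial_iso:
  assumes len: "length ys' = length ys" and eq: "qf_type R ys = qf_type R ys'"
  obtains f where "partial_iso R (set ys) f" "map f ys = ys'"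
proof -
  define f where "f = (\<lambda>x. ys' ! (SOME i. i < length ys \<and> ys ! i = x))"
  have same: "(R (ys ! i) (ys ! j) \<longleftrightarrow> R (ys' ! i) (ys' ! j)) \<and> (ys ! i = ys ! j \<longleftrightarrow> ys' ! i = ys' ! j)"
    if "i < length ys" "j < length ys" for i j
    using eq that len by (simp add: qf_type_eq_iff)
  have f_nth: "f (ys ! i) = ys' ! i" if "i < length ys" for i
  proof -
    have "\<exists>i'. i' < length ys \<and> ys ! i' = ys ! i" using that by blast
    then have "(SOME i'. i' < length ys \<and> ys ! i' = ys ! i) < length ys \<and>
        ys ! (SOME i'. i' < length ys \<and> ys ! i' = ys ! i) = ys ! i"
      by (rule someI_ex)
    then show ?thesis unfolding f_def using same that by blast
  qed
  have "partial_iso R (set ys) f"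
    unfolding partial_iso_def inj_on_def
    using same by (auto simp: in_set_conv_nth f_nth)
  moreover have "map f ys = ys'"
    using len by (intro nth_equalityI) (auto simp: f_nth)
  ultimately show ?thesis by (rule that)
qed

lemma sat_qf_type_invariant:
  assumes S: "binary_struc S R" "ultrahomogeneous R" and \<phi>: "wf_fm S \<phi>" "fv \<phi> \<subseteq> {..<length ys}"
    and len: "length ys' = length ys" and eq: "qf_type R ys = qf_type R ys'"
  shows "sat S (asg ys v) \<phi> \<longleftrightarrow> sat S (asg ys' v') \<phi>"
proof -
  obtain f where f: "partial_iso R (set ys) f" "map f ys = ys'"
    using qf_type_partial_iso[OF len eq] by blast
  then obtain g where g: "bij g" "\<forall>x y. R x y \<longleftrightarrow> R (g x) (g y)" "\<forall>x\<in>set ys. g x = f x"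
    using S(2) unfolding ultrahomogeneous_def by blast
  have "sat S (asg ys v) \<phi> \<longleftrightarrow> sat S (\<lambda>i. g (asg ys v i)) \<phi>"
    using sat_automorphism[OF automorphism_binary_struc[OF S(1) g(1)] \<phi>(1)] g(2) by simp
  also have "\<dots> \<longleftrightarrow> sat S (asg ys' v') \<phi>"
  proof (rule sat_cong)
    fix i assume "i \<in> fv \<phi>"
    then have "i < length ys" using \<phi>(2) by auto
    then show "g (asg ys v i) = asg ys' v' i"
      using g(3) f(2) len by (auto simp: asg_def)
  qed
  finally show ?thesis .
qed

definition blocks :: "nat \<Rightarrow> nat \<Rightarrow> 'a list \<Rightarrow> 'a list list" where
  "blocks m L ws = map (\<lambda>i. take m (drop (i * m) ws)) [0..<L]"

lemma blocks_concat:
  "(\<And>xs. xs \<in> set xss \<Longrightarrow> length xs = m) \<Longrightarrow> blocks m (length xss) (concat xss) = xss"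
proof (induction xss)
  case (Cons xs xss)
  have "blocks m (length (xs # xss)) (concat (xs # xss)) =
      take m (xs @ concat xss) # map (\<lambda>i. take m (drop (Suc i * m) (xs @ concat xss))) [0..<length xss]"
    unfolding blocks_def by (simp add: map_upt_Suc del: upt_Suc)
  also have "\<dots> = xs # blocks m (length xss) (concat xss)"
    using Cons.prems by (simp add: blocks_def)
  finally show ?case using Cons by simp
qed (simp add: blocks_def)

lemma definable0_block_pair:
  fixes S :: "('a, 'f, 'r, 'z) struc_scheme"
  assumes Z: "definable0 S (2 * m) Z" and ij: "i < L" "j < L"
  shows "definable0 S (m * L) {ws. length ws = m * L \<and>
    (take m (drop (i * m) ws) @ take m (drop (j * m) ws) \<in> Z \<longleftrightarrow> b)}"
proof -
  define \<sigma> where "\<sigma> = (\<lambda>l. if l < m then i * m + l else j * m + (l - m))"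
  have \<sigma>: "\<sigma> l < m * L" if "l < 2 * m" for l
    using block_index_less[OF ij(1), of "l" m] block_index_less[OF ij(2), of "l - m" m] that
    by (auto simp: \<sigma>_def mult.commute)
  have "map (\<lambda>l. ws ! \<sigma> l) [0..<2 * m] = take m (drop (i * m) ws) @ take m (drop (j * m) ws)"
    if "length ws = m * L" for ws :: "'a list"
  proof (rule nth_equalityI)
    have "i * m + m \<le> m * L" "j * m + m \<le> m * L"
      using block_index_less[OF ij(1), of "m - 1" m] block_index_less[OF ij(2), of "m - 1" m]
      by (cases m; simp add: mult.commute)+
    then show "length (map (\<lambda>l. ws ! \<sigma> l) [0..<2 * m]) =
        length (take m (drop (i * m) ws) @ take m (drop (j * m) ws))"
      using that by simp
    fix l assume "l < length (map (\<lambda>l. ws ! \<sigma> l) [0..<2 * m])"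
    then have l: "l < 2 * m" by simp
    have "i * m + m \<le> length ws" "j * m + m \<le> length ws"
      using \<open>i * m + m \<le> m * L\<close> \<open>j * m + m \<le> m * L\<close> that by linarith+
    then show "map (\<lambda>l. ws ! \<sigma> l) [0..<2 * m] ! l =
        (take m (drop (i * m) ws) @ take m (drop (j * m) ws)) ! l"
      using l by (cases "l < m") (simp_all add: \<sigma>_def nth_append)
  qed
  then have "{ws. length ws = m * L \<and> (take m (drop (i * m) ws) @ take m (drop (j * m) ws) \<in> Z \<longleftrightarrow> b)} =
      {ws. length ws = m * L \<and> (map (\<lambda>l. ws ! \<sigma> l) [0..<2 * m] \<in> Z \<longleftrightarrow> b)}"
    by auto
  then show ?thesis using definable0_reindex_iff[OF Z \<sigma>] by simp
qed

lemma definable0_qf_type_blocks: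
  fixes S :: "('a, 'f, 'r, 'z) struc_scheme"
  assumes Z: "definable0 S (2 * m) Z" and ys: "length ys = L"
  shows "definable0 S (m * L)
    {ws. length ws = m * L \<and> qf_type (\<lambda>s t. s @ t \<in> Z) (blocks m L ws) = qf_type R ys}"
proof -
  define Eq where "Eq = {xs :: 'a list. length xs = 2 * m \<and> take m xs = drop m xs}"
  define pair where "pair = (\<lambda>(ws :: 'a list) i j. take m (drop (i * m) ws) @ take m (drop (j * m) ws))"
  define A where "A = (\<lambda>(i, j). {ws. length ws = m * L \<and> (pair ws i j \<in> Z \<longleftrightarrow> R (ys ! i) (ys ! j))} \<inter>
      {ws. length ws = m * L \<and> (pair ws i j \<in> Eq \<longleftrightarrow> ys ! i = ys ! j)})"
  have "definable0 S (2 * m) Eq"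
    unfolding Eq_def by (rule definable0_halves_eq)
  then have "definable0 S (m * L) ({ws. length ws = m * L} \<inter> (\<Inter>ij\<in>{..<L} \<times> {..<L}. A ij))"
    unfolding A_def pair_def
    by (intro definable0_INT) (auto intro!: definable0_Int definable0_block_pair Z)
  moreover have "{ws. length ws = m * L \<and> qf_type (\<lambda>s t. s @ t \<in> Z) (blocks m L ws) = qf_type R ys} =
      {ws. length ws = m * L} \<inter> (\<Inter>ij\<in>{..<L} \<times> {..<L}. A ij)"
  proof -
    have "take m (drop (i * m) ws) = take m (drop (j * m) ws) \<longleftrightarrow> pair ws i j \<in> Eq"
      if "length ws = m * L" "i < L" "j < L" for ws i j
    proof -
      have "i * m + m \<le> m * L" "j * m + m \<le> m * L"
        using that(2,3) block_index_less[of _ L "m - 1" m] by (cases m; force simp: mult.commute)+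
      then show ?thesis using that(1) by (simp add: pair_def Eq_def)
    qed
    then show ?thesis
      using ys by (auto simp: qf_type_eq_iff blocks_def A_def pair_def)
  qed
  ultimately show ?thesis by simp
qed

lemma definable0_qf_types_blocks:
  fixes S :: "('a, 'f, 'r, 'z) struc_scheme"
  assumes Z: "definable0 S (2 * m) Z" and Ys: "finite (qf_type R ` Ys)" "\<And>ys. ys \<in> Ys \<Longrightarrow> length ys = L"
  shows "definable0 S (m * L)
    {ws. length ws = m * L \<and> qf_type (\<lambda>s t. s @ t \<in> Z) (blocks m L ws) \<in> qf_type R ` Ys}"
proof -
  have "definable0 S (m * L) (\<Union>\<pi>\<in>qf_type R ` Ys.
      {ws. length ws = m * L \<and> qf_type (\<lambda>s t. s @ t \<in> Z) (blocks m L ws) = \<pi>})"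
    using Ys by (intro definable0_UN) (auto intro: definable0_qf_type_blocks[OF Z])
  moreover have "{ws. length ws = m * L \<and> qf_type (\<lambda>s t. s @ t \<in> Z) (blocks m L ws) \<in> qf_type R ` Ys} =
      (\<Union>\<pi>\<in>qf_type R ` Ys. {ws. length ws = m * L \<and> qf_type (\<lambda>s t. s @ t \<in> Z) (blocks m L ws) = \<pi>})"
    by blast
  ultimately show ?thesis by simp
qed

text \<open>A set defined with parameters \<open>cs\<close> is the union of the finitely many quantifier-free
  types over \<open>cs\<close> that it meets, and \<open>\<tau>\<close> transports each such type to a definable set.\<close>
theorem trace_defines_via_binary:
  fixes M :: "('a, 'f, 'r, 'z) struc_scheme" and Ost :: "('b, 'g, unit, 'y) struc_scheme"
  assumes Ost: "binary_struc Ost R" "ultrahomogeneous R"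
    and \<tau>: "inj \<tau>" "\<And>u. length (\<tau> u) = m"
    and Z: "definable0 M (2 * m) Z" "\<And>u v. R u v \<longleftrightarrow> \<tau> u @ \<tau> v \<in> Z"
  shows "trace_defines_via M Ost m \<tau>"
  unfolding trace_defines_via_def
proof (intro conjI allI impI)
  fix n X assume "definable Ost n X"
  then obtain \<theta> v where \<theta>: "wf_fm Ost \<theta>" and X: "X = {bs. length bs = n \<and> sat Ost (asg bs v) \<theta>}"
    unfolding definable_def by blast
  obtain B where B: "fv \<theta> \<subseteq> {..<n + B}" by (rule fv_bounded_obtain)
  define cs where "cs = map v [n..<n + B]"
  define L where "L = n + B"
  have len_concat: "length (concat (map \<tau> xs)) = m * length xs" for xs
    by (induction xs) (simp_all add: \<tau>(2))
  have in_X: "bs \<in> X \<longleftrightarrow> length bs = n \<and> sat Ost (asg (bs @ cs) v) \<theta>" for bs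
    using asg_append_params[of \<theta> bs B Ost v v] B unfolding X cs_def by auto
  define type where "type = (\<lambda>ws. qf_type (\<lambda>s t. s @ t \<in> Z) (blocks m L ws))"
  have type_concat: "type (concat (map \<tau> ys)) = qf_type R ys" if "length ys = L" for ys
  proof -
    have "blocks m L (concat (map \<tau> ys)) = map \<tau> ys"
      using blocks_concat[of "map \<tau> ys" m] \<tau>(2) that by auto
    then show ?thesis unfolding type_def by (simp only:) (rule qf_type_map[OF \<tau>(1)], simp add: Z(2))
  qed
  define Y' where "Y' = {ws. length ws = m * L \<and> type ws \<in> qf_type R ` (\<lambda>bs. bs @ cs) ` X}"
  have "finite (qf_type R ` (\<lambda>bs. bs @ cs) ` X)"
  proof (rule finite_subset)
    show "qf_type R ` (\<lambda>bs. bs @ cs) ` X \<subseteq> qf_type R ` {ys. length ys = L}"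
      by (auto simp: in_X L_def cs_def)
  qed (rule finite_qf_types)
  then have "definable0 M (m * L) Y'"
    unfolding Y'_def type_def
    by (rule definable0_qf_types_blocks[OF Z(1)]) (auto simp: in_X L_def cs_def)
  then have "definable M (m * n) {zs. zs @ concat (map \<tau> cs) \<in> Y'}"
    by (intro definable_fix_params) (simp_all only: len_concat, simp_all add: cs_def L_def distrib_left)
  moreover have "X = {bs. length bs = n \<and> concat (map \<tau> bs) \<in> {zs. zs @ concat (map \<tau> cs) \<in> Y'}}"
  proof (intro set_eqI iffI)
    fix bs assume "bs \<in> X"
    then show "bs \<in> {bs. length bs = n \<and> concat (map \<tau> bs) \<in> {zs. zs @ concat (map \<tau> cs) \<in> Y'}}"
      using type_concat[of "bs @ cs"] len_concat[of "bs @ cs"]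
      by (auto simp: in_X Y'_def L_def cs_def distrib_left)
  next
    fix bs assume "bs \<in> {bs. length bs = n \<and> concat (map \<tau> bs) \<in> {zs. zs @ concat (map \<tau> cs) \<in> Y'}}"
    then obtain bs0 where bs: "length bs = n" and bs0: "bs0 \<in> X"
      and eq: "qf_type R (bs0 @ cs) = qf_type R (bs @ cs)"
      using type_concat[of "bs @ cs"] by (auto simp: Y'_def L_def cs_def)
    have "sat Ost (asg (bs0 @ cs) v) \<theta> \<longleftrightarrow> sat Ost (asg (bs @ cs) v) \<theta>"
      by (rule sat_qf_type_invariant[OF Ost \<theta> _ _ eq]) (use B bs bs0 in \<open>auto simp: in_X cs_def\<close>)
    then show "bs \<in> X" using bs bs0 by (simp add: in_X)
  qed
  ultimately show "\<exists>Y. definable M (m * n) Y \<and> X = {bs. length bs = n \<and> concat (map \<tau> bs) \<in> Y}"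
    by blast
qed (use \<tau> in auto)

section \<open>The rational order and the random graph\<close>

lemma dense_between_finite:
  fixes Lo Up :: "'a::{dense_linorder, no_top, no_bot} set"
  assumes "finite Lo" "finite Up" "\<forall>l\<in>Lo. \<forall>u\<in>Up. l < u"
  shows "\<exists>y. (\<forall>l\<in>Lo. l < y) \<and> (\<forall>u\<in>Up. y < u)"
proof (cases "Lo = {}"; cases "Up = {}")
  assume "Lo = {}" "Up = {}"
  then show ?thesis by simp
next
  assume "Lo = {}" "Up \<noteq> {}"
  obtain y where "y < Min Up" using lt_ex by blast
  moreover have "\<forall>u\<in>Up. Min Up \<le> u" using assms(2) by simp
  ultimately show ?thesis using \<open>Lo = {}\<close> by (auto intro: less_le_trans)
next
  assume "Lo \<noteq> {}" "Up = {}"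
  obtain y where "Max Lo < y" using gt_ex by blast
  moreover have "\<forall>l\<in>Lo. l \<le> Max Lo" using assms(1) by simp
  ultimately show ?thesis using \<open>Up = {}\<close> by (auto intro: le_less_trans)
next
  assume "Lo \<noteq> {}" "Up \<noteq> {}"
  then have "Max Lo < Min Up" using assms by simp
  then obtain y where "Max Lo < y" "y < Min Up" using dense by blast
  moreover have "\<forall>l\<in>Lo. l \<le> Max Lo" "\<forall>u\<in>Up. Min Up \<le> u" using assms(1,2) by simp_all
  ultimately show ?thesis by (auto intro: le_less_trans less_le_trans)
qed

lemma partial_iso_less_iff:
  fixes f :: "'a::linorder \<Rightarrow> 'a"
  shows "partial_iso (<) A f \<longleftrightarrow> finite A \<and> (\<forall>x\<in>A. \<forall>y\<in>A. x < y \<longleftrightarrow> f x < f y)"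
proof -
  have "inj_on f A" if mono: "\<forall>x\<in>A. \<forall>y\<in>A. x < y \<longleftrightarrow> f x < f y"
  proof (rule inj_onI)
    fix x y assume "x \<in> A" "y \<in> A" "f x = f y"
    then show "x = y" using mono by (cases x y rule: linorder_cases) auto
  qed
  then show ?thesis unfolding partial_iso_def by blast
qed

lemma one_point_extension_dense_linorder:
  "one_point_extension ((<) :: 'a::{countable, dense_linorder, no_top, no_bot} \<Rightarrow> 'a \<Rightarrow> bool)"
proof
  fix A and f :: "'a \<Rightarrow> 'a" and x
  assume f: "partial_iso (<) A f" and x: "x \<notin> A"
  then have A: "finite A" and mono: "\<forall>a\<in>A. \<forall>b\<in>A. a < b \<longleftrightarrow> f a < f b"
    by (auto simp: partial_iso_less_iff)
  have sep: "\<forall>l\<in>f ` {a\<in>A. a < x}. \<forall>u\<in>f ` {a\<in>A. x < a}. l < u"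
    using mono by (auto dest: less_trans)
  have fin: "finite (f ` {a\<in>A. a < x})" "finite (f ` {a\<in>A. x < a})"
    using A by auto
  obtain y where y: "\<forall>l\<in>f ` {a\<in>A. a < x}. l < y" "\<forall>u\<in>f ` {a\<in>A. x < a}. y < u"
    using dense_between_finite[OF fin sep] by blast
  have "(a < x \<longleftrightarrow> f a < y) \<and> (x < a \<longleftrightarrow> y < f a)" if "a \<in> A" for a
  proof (cases a x rule: linorder_cases)
    case less
    then show ?thesis using y(1) that by auto
  next
    case greater
    then show ?thesis using y(2) that by auto
  qed (use that x in simp)
  then have "partial_iso (<) (insert x A) (f(x := y))"
    using A mono x by (auto simp: partial_iso_less_iff)
  then show "\<exists>y. partial_iso (<) (insert x A) (f(x := y))" by blast
qed

lemma ultrahomogeneous_rat_less: "ultrahomogeneous ((<) :: rat \<Rightarrow> rat \<Rightarrow> bool)"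
  by (rule one_point_extension.ultrahomogeneous[OF one_point_extension_dense_linorder])

lemma finite_linorder_rank:
  fixes S :: "'b::linorder set"
  assumes "finite S"
  obtains \<rho> :: "'b \<Rightarrow> nat" where "\<And>x. x \<in> S \<Longrightarrow> \<rho> x < card S"
    "\<And>x y. x \<in> S \<Longrightarrow> y \<in> S \<Longrightarrow> \<rho> x < \<rho> y \<longleftrightarrow> x < y"
proof
  show "card {s\<in>S. s < x} < card S" if "x \<in> S" for x
    using assms that by (intro psubset_card_mono) auto
  show "card {s\<in>S. s < x} < card {s\<in>S. s < y} \<longleftrightarrow> x < y" if "x \<in> S" "y \<in> S" for x y
  proof
    assume "x < y"
    then have "{s\<in>S. s < x} \<subset> {s\<in>S. s < y}" using that by auto
    then show "card {s\<in>S. s < x} < card {s\<in>S. s < y}" using assms by (intro psubset_card_mono) auto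
  next
    assume "card {s\<in>S. s < x} < card {s\<in>S. s < y}"
    moreover have "\<not> x < y \<Longrightarrow> card {s\<in>S. s < y} \<le> card {s\<in>S. s < x}"
      using assms by (intro card_mono) auto
    ultimately show "x < y" by linarith
  qed
qed

text \<open>Rado's model of the random graph: \<open>x\<close> and \<open>y\<close> are adjacent iff the \<open>y\<close>-th binary
  digit of \<open>x\<close> is set, or vice versa.\<close>
definition rado :: "nat \<Rightarrow> nat \<Rightarrow> bool" where
  "rado x y \<longleftrightarrow> bit x y \<or> bit y x"

lemma bit_nat_less: "bit (a :: nat) n \<Longrightarrow> n < a"
proof -
  assume "bit a n"
  then have "a div 2 ^ n \<noteq> 0" by (auto simp: bit_iff_odd dest: odd_pos)
  then have "2 ^ n \<le> a" by (simp add: div_eq_0_iff)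
  moreover have "n < 2 ^ n" by (rule less_exp)
  ultimately show ?thesis by linarith
qed

lemma rado_commute: "rado x y \<longleftrightarrow> rado y x"
  unfolding rado_def by blast

lemma rado_irrefl: "\<not> rado x x"
  unfolding rado_def using bit_nat_less by blast

text \<open>The witness is the number whose binary digits are \<open>U\<close> together with a digit \<open>Z\<close> above
  all given vertices; it is then larger than all of them, so none of them has it as a digit.\<close>
lemma rado_extension:
  assumes "finite U" "finite V" "finite W" "U \<inter> V = {}"
  shows "\<exists>z. z \<notin> W \<and> (\<forall>u\<in>U. rado u z) \<and> (\<forall>v\<in>V. \<not> rado v z)"
proof -
  obtain Z where Z: "\<forall>x\<in>U \<union> V \<union> W. x < Z"
    using finite_nat_bounded[of "U \<union> V \<union> W"] assms(1-3) by auto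
  obtain us where us: "set us = insert Z U"
    using assms(1) finite_list by (metis finite_insert)
  define z :: nat where "z = foldr set_bit us 0"
  have bit_z: "bit z i \<longleftrightarrow> i = Z \<or> i \<in> U" for i
  proof -
    have "bit (foldr set_bit xs (0 :: nat)) i \<longleftrightarrow> i \<in> set xs" for xs :: "nat list"
      by (induction xs) (auto simp: bit_set_bit_iff)
    then show ?thesis using us by (simp add: z_def)
  qed
  have "Z < z" using bit_nat_less bit_z by blast
  then have small: "x < z" "\<not> bit x z" if "x \<in> U \<union> V \<union> W" for x
    using Z that bit_nat_less by (meson less_trans not_less_iff_gr_or_eq)+
  show ?thesis
  proof (intro exI conjI ballI)
    show "z \<notin> W" using small(1) by blast
    show "rado u z" if "u \<in> U" for u unfolding rado_def using bit_z that by simp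
    show "\<not> rado v z" if "v \<in> V" for v
      using that small[of v] Z assms(4) bit_z unfolding rado_def by auto
  qed
qed

lemma rado_extend_embedding:
  assumes f: "inj_on f S" "\<forall>a\<in>S. \<forall>b\<in>S. G a b \<longleftrightarrow> rado (f a) (f b)" and S: "finite S" "x \<notin> S"
    and G: "\<And>a. a \<in> S \<Longrightarrow> G a x \<longleftrightarrow> G x a" "\<not> G x x"
  shows "\<exists>z. inj_on (f(x := z)) (insert x S) \<and>
    (\<forall>a\<in>insert x S. \<forall>b\<in>insert x S. G a b \<longleftrightarrow> rado ((f(x := z)) a) ((f(x := z)) b))"
proof -
  have "f ` {s\<in>S. G s x} \<inter> f ` {s\<in>S. \<not> G s x} = {}"
    using f(1) by (auto simp: inj_on_def)
  then obtain z where z: "z \<notin> f ` S" "\<forall>s\<in>S. G s x \<longrightarrow> rado (f s) z" "\<forall>s\<in>S. \<not> G s x \<longrightarrow> \<not> rado (f s) z"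
    using rado_extension[of "f ` {s\<in>S. G s x}" "f ` {s\<in>S. \<not> G s x}" "f ` S"] S(1) by auto
  then have "G s x \<longleftrightarrow> rado (f s) z" "G x s \<longleftrightarrow> rado z (f s)" if "s \<in> S" for s
    using that G(1) rado_commute by blast+
  then show ?thesis
    using f z(1) S(2) G(2) rado_irrefl by (intro exI[of _ z]) (auto simp: inj_on_def)
qed

lemma one_point_extension_rado: "one_point_extension rado"
proof
  fix A f x assume f: "partial_iso rado A f" and x: "x \<notin> A"
  have "\<exists>z. inj_on (f(x := z)) (insert x A) \<and>
      (\<forall>a\<in>insert x A. \<forall>b\<in>insert x A. rado a b \<longleftrightarrow> rado ((f(x := z)) a) ((f(x := z)) b))"
  proof (rule rado_extend_embedding)
    show "inj_on f A" "\<forall>a\<in>A. \<forall>b\<in>A. rado a b \<longleftrightarrow> rado (f a) (f b)" "finite A"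
      using f by (simp_all add: partial_iso_def)
  qed (simp_all add: x rado_commute rado_irrefl)
  then show "\<exists>y. partial_iso rado (insert x A) (f(x := y))"
    using f unfolding partial_iso_def by auto
qed

lemma rado_universal:
  "finite S \<Longrightarrow> (\<forall>x\<in>S. \<forall>y\<in>S. G x y \<longrightarrow> G y x) \<Longrightarrow> (\<forall>x\<in>S. \<not> G x x) \<Longrightarrow>
    \<exists>f. inj_on f S \<and> (\<forall>x\<in>S. \<forall>y\<in>S. G x y \<longleftrightarrow> rado (f x) (f y))"
proof (induction S rule: finite_induct)
  case (insert x S)
  have "\<forall>a\<in>S. \<forall>b\<in>S. G a b \<longrightarrow> G b a" "\<forall>a\<in>S. \<not> G a a"
    using insert.prems by auto
  then obtain f where f: "inj_on f S" "\<forall>a\<in>S. \<forall>b\<in>S. G a b \<longleftrightarrow> rado (f a) (f b)"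
    using insert.IH by blast
  have "\<exists>z. inj_on (f(x := z)) (insert x S) \<and>
      (\<forall>a\<in>insert x S. \<forall>b\<in>insert x S. G a b \<longleftrightarrow> rado ((f(x := z)) a) ((f(x := z)) b))"
    by (rule rado_extend_embedding[OF f insert.hyps]) (use insert.prems in auto)
  then show ?case by blast
qed simp

lemma is_random_graph_rado: "is_random_graph rado"
  unfolding is_random_graph_def
proof (intro conjI allI impI)
  show "rado x y \<Longrightarrow> rado y x" for x y by (simp add: rado_commute)
  show "\<not> rado x x" for x by (rule rado_irrefl)
  show "\<exists>f. inj_on f S \<and> (\<forall>x\<in>S. \<forall>y\<in>S. G x y = rado (f x) (f y))"
    if "finite S" "\<forall>x\<in>S. \<forall>y\<in>S. G x y \<longrightarrow> G y x" "\<forall>x\<in>S. \<not> G x x" for S G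
    using rado_universal[OF that] .
  show "\<exists>g. bij g \<and> (\<forall>x y. rado x y = rado (g x) (g y)) \<and> (\<forall>x\<in>A. g x = f x)"
    if "finite A" "inj_on f A" "\<forall>x\<in>A. \<forall>y\<in>A. rado x y = rado (f x) (f y)" for A f
  proof -
    have "partial_iso rado A f" using that by (simp add: partial_iso_def)
    then show ?thesis
      using one_point_extension.ultrahomogeneous[OF one_point_extension_rado]
      unfolding ultrahomogeneous_def by blast
  qed
qed

lemma random_graph_ultrahomogeneous: "is_random_graph E \<Longrightarrow> ultrahomogeneous E"
  unfolding is_random_graph_def ultrahomogeneous_def partial_iso_def by (elim conjE) simp

lemma random_graph_universal:
  fixes S :: "nat set"
  assumes "is_random_graph E" "finite S" "\<forall>x\<in>S. \<forall>y\<in>S. G x y \<longrightarrow> G y x" "\<forall>x\<in>S. \<not> G x x"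
  obtains f where "inj_on f S" "\<forall>x\<in>S. \<forall>y\<in>S. G x y \<longleftrightarrow> E (f x) (f y)"
  using assms(1)[unfolded is_random_graph_def, THEN conjunct2, THEN conjunct2, THEN conjunct1,
      THEN spec[of _ S], THEN spec[of _ G], THEN mp, OF assms(2), THEN mp, OF assms(3), THEN mp, OF assms(4)]
  by blast

text \<open>Embed the finite graph \<open>U \<union> V\<close> with a new vertex joined exactly to \<open>U\<close>, then move the
  embedded copy of \<open>U \<union> V\<close> back into place by an automorphism.\<close>
lemma random_graph_extension:
  assumes E: "is_random_graph E" and UV: "finite U" "finite V" "U \<inter> V = {}"
  shows "\<exists>z. (\<forall>u\<in>U. E u z) \<and> (\<forall>v\<in>V. \<not> E v z)"
proof -
  have sym: "E x y \<Longrightarrow> E y x" and irrefl: "\<not> E x x" for x y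
    using E[unfolded is_random_graph_def, THEN conjunct1] E[unfolded is_random_graph_def, THEN conjunct2, THEN conjunct1]
    by blast+
  define T where "T = U \<union> V"
  have T: "finite T" using UV by (simp add: T_def)
  obtain z0 :: nat where z0: "z0 \<notin> T"
    using ex_new_if_finite[OF infinite_UNIV_nat T] by blast
  define G where "G = (\<lambda>x y. (x \<in> T \<and> y \<in> T \<and> E x y) \<or> (x = z0 \<and> y \<in> U) \<or> (y = z0 \<and> x \<in> U))"
  have G_sym: "\<forall>x\<in>insert z0 T. \<forall>y\<in>insert z0 T. G x y \<longrightarrow> G y x"
    using sym by (auto simp: G_def)
  have G_irrefl: "\<forall>x\<in>insert z0 T. \<not> G x x"
    using irrefl z0 by (auto simp: G_def T_def)
  obtain f where f: "inj_on f (insert z0 T)"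
    "\<forall>x\<in>insert z0 T. \<forall>y\<in>insert z0 T. G x y \<longleftrightarrow> E (f x) (f y)"
    by (rule random_graph_universal[OF E finite_insert[THEN iffD2, OF T] G_sym G_irrefl])
  have "inj_on f T" using f(1) by (rule inj_on_subset) blast
  moreover have "E x y \<longleftrightarrow> E (f x) (f y)" if "x \<in> T" "y \<in> T" for x y
  proof -
    have "x \<noteq> z0" "y \<noteq> z0" using that z0 by auto
    then have "G x y \<longleftrightarrow> E x y" using that by (simp add: G_def)
    then show ?thesis using f(2) that by simp
  qed
  ultimately have "partial_iso E T f"
    using T unfolding partial_iso_def by blast
  then have "partial_iso E (f ` T) (inv_into T f)"
    by (rule partial_iso_inv)
  then obtain g where g: "\<forall>x y. E x y \<longleftrightarrow> E (g x) (g y)" "\<forall>x\<in>f ` T. g x = inv_into T f x"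
    using random_graph_ultrahomogeneous[OF E] unfolding ultrahomogeneous_def by blast
  have "E a (g (f z0)) \<longleftrightarrow> G a z0" if "a \<in> T" for a
  proof -
    have "g (f a) = a"
      using g(2) \<open>inj_on f T\<close> that by (simp add: inv_into_f_f)
    then have "E a (g (f z0)) \<longleftrightarrow> E (g (f a)) (g (f z0))" by simp
    also have "\<dots> \<longleftrightarrow> E (f a) (f z0)" using g(1) by blast
    also have "\<dots> \<longleftrightarrow> G a z0" using f(2) that by blast
    finally show ?thesis .
  qed
  then show ?thesis
    using z0 UV(3) by (intro exI[of _ "g (f z0)"]) (auto simp: G_def T_def)
qed

section \<open>Instability, the independence property and trace definability\<close>

lemma trace_defines_binary_from_formula:
  fixes M :: "('a, 'f, 'r, 'z) struc_scheme" and Ost :: "('b, 'g, unit, 'y) struc_scheme"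
  assumes Ost: "binary_struc Ost R" "ultrahomogeneous R"
    and \<phi>: "wf_fm M \<phi>" "fv \<phi> \<subseteq> {..<p + q}"
    and ab: "\<And>u. length (a u) = p" "\<And>u. length (b u) = q"
    and pattern: "\<And>u v. sat M (asg (a u @ b v) (\<lambda>_. undefined)) \<phi> \<longleftrightarrow> R u v"
    and separating: "\<And>u v. u \<noteq> v \<Longrightarrow> \<exists>w. R u w \<noteq> R v w"
  shows "trace_defines M Ost"
proof -
  define m where "m = p + q"
  define \<tau> where "\<tau> = (\<lambda>u. a u @ b u)"
  have len: "length (\<tau> u) = m" for u using ab by (simp add: \<tau>_def m_def)
  define \<sigma> where "\<sigma> = (\<lambda>l. if l < p then l else m + l)"
  define Z\<phi> where "Z\<phi> = {xs. length xs = m \<and> sat M (asg xs (\<lambda>_. undefined)) \<phi>}"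
  define Z where "Z = {xs. length xs = 2 * m \<and> map (\<lambda>l. xs ! \<sigma> l) [0..<m] \<in> Z\<phi>}"
  have "definable0 M m Z\<phi>"
    unfolding Z\<phi>_def by (rule definable0_formula[OF \<phi>(1)]) (use \<phi>(2) in \<open>simp add: m_def\<close>)
  then have "definable0 M (2 * m) Z"
    unfolding Z_def by (rule definable0_reindex) (auto simp: \<sigma>_def m_def)
  moreover have "R u v \<longleftrightarrow> \<tau> u @ \<tau> v \<in> Z" for u v
  proof -
    have "map (\<lambda>l. (\<tau> u @ \<tau> v) ! \<sigma> l) [0..<m] = a u @ b v"
      using ab by (intro nth_equalityI) (auto simp: \<sigma>_def \<tau>_def nth_append m_def)
    then show ?thesis
      using pattern[of u v] ab len by (simp add: Z_def Z\<phi>_def m_def)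
  qed
  moreover have "inj \<tau>"
  proof (rule injI)
    fix u v assume "\<tau> u = \<tau> v"
    then have "a u = a v" using ab unfolding \<tau>_def by (metis append_eq_append_conv)
    then have "R u w = R v w" for w using pattern[of u w] pattern[of v w] by simp
    then show "u = v" using separating by blast
  qed
  ultimately have "trace_defines_via M Ost m \<tau>"
    using trace_defines_via_binary[OF Ost] len by blast
  then show ?thesis unfolding trace_defines_def by blast
qed

lemma trace_defines_relation_formula:
  fixes M :: "('a, 'f, 'r, 'z) struc_scheme" and Ost :: "('b, 'g, 's, 'y) struc_scheme"
  assumes tr: "trace_defines M Ost" and R: "definable Ost 2 {xs. length xs = 2 \<and> R (xs ! 0) (xs ! 1)}"
  shows "\<exists>\<theta> m ps \<tau>. wf_fm M \<theta> \<and> fv \<theta> \<subseteq> {..<m + (m + length ps)} \<and> (\<forall>u. length (\<tau> u) = m) \<and>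
    (\<forall>u v. sat M (asg (\<tau> u @ (\<tau> v @ ps)) (\<lambda>_. undefined)) \<theta> \<longleftrightarrow> R u v)"
proof -
  obtain m \<tau> where t: "trace_defines_via M Ost m \<tau>"
    using tr unfolding trace_defines_def by blast
  then have len: "\<And>u. length (\<tau> u) = m" unfolding trace_defines_via_def by blast
  obtain Y where Y: "definable M (m * 2) Y"
    "{xs. length xs = 2 \<and> R (xs ! 0) (xs ! 1)} = {bs. length bs = 2 \<and> concat (map \<tau> bs) \<in> Y}"
    using t R unfolding trace_defines_via_def by blast
  obtain \<theta> v where \<theta>: "wf_fm M \<theta>" "Y = {xs. length xs = m * 2 \<and> sat M (asg xs v) \<theta>}"
    using Y(1) unfolding definable_def by blast
  obtain B where B: "fv \<theta> \<subseteq> {..<2 * m + B}" by (rule fv_bounded_obtain)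
  define ps where "ps = map v [2 * m..<2 * m + B]"
  have "R u u' \<longleftrightarrow> sat M (asg (\<tau> u @ (\<tau> u' @ ps)) (\<lambda>_. undefined)) \<theta>" for u u'
  proof -
    have "R u u' \<longleftrightarrow> [u, u'] \<in> {xs. length xs = 2 \<and> R (xs ! 0) (xs ! 1)}" by simp
    also have "\<dots> \<longleftrightarrow> sat M (asg (\<tau> u @ \<tau> u') v) \<theta>"
      unfolding Y(2) \<theta>(2) using len by simp
    also have "\<dots> \<longleftrightarrow> sat M (asg (\<tau> u @ (\<tau> u' @ ps)) (\<lambda>_. undefined)) \<theta>"
      using asg_append_params[of \<theta> "\<tau> u @ \<tau> u'" B M v "\<lambda>_. undefined"] B len
      by (simp add: ps_def mult_2)
    finally show ?thesis .
  qed
  moreover have "fv \<theta> \<subseteq> {..<m + (m + length ps)}" using B by (auto simp: ps_def)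
  ultimately show ?thesis using \<theta>(1) len by metis
qed

lemma order_pattern_relabel:
  fixes h :: "nat \<Rightarrow> 'b::linorder"
  assumes "\<exists>a b. (\<forall>i. length (a i) = p \<and> length (b i) = q) \<and> (\<forall>i<K. \<forall>j<K. \<Phi> (a i) (b j) \<longleftrightarrow> i < j)"
  shows "\<exists>a b. (\<forall>i. length (a i) = p \<and> length (b i) = q) \<and> (\<forall>i<K. \<forall>j<K. \<Phi> (a i) (b j) \<longleftrightarrow> h i < h j)"
proof -
  obtain a b where ab: "\<forall>i. length (a i) = p \<and> length (b i) = q"
    "\<forall>i<K. \<forall>j<K. \<Phi> (a i) (b j) \<longleftrightarrow> i < j"
    using assms by blast
  obtain \<rho> where \<rho>: "\<And>x. x \<in> h ` {..<K} \<Longrightarrow> \<rho> x < card (h ` {..<K})"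
    "\<And>x y. x \<in> h ` {..<K} \<Longrightarrow> y \<in> h ` {..<K} \<Longrightarrow> \<rho> x < \<rho> y \<longleftrightarrow> x < y"
    using finite_linorder_rank[of "h ` {..<K}"] by blast
  have "\<rho> (h i) < K" if "i < K" for i
    using \<rho>(1)[of "h i"] card_image_le[of "{..<K}" h] that by fastforce
  then show ?thesis
    using ab \<rho>(2) by (intro exI[of _ "a \<circ> \<rho> \<circ> h"] exI[of _ "b \<circ> \<rho> \<circ> h"]) auto
qed

lemma independence_pattern_relabel:
  assumes "\<exists>a b. (\<forall>i. length (a i) = p) \<and> (\<forall>S. length (b S) = q) \<and>
    (\<forall>i<K. \<forall>S. S \<subseteq> {..<K} \<longrightarrow> (\<Phi> (a i) (b S) \<longleftrightarrow> i \<in> S))"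
  shows "\<exists>a b. (\<forall>i. length (a i) = p \<and> length (b i) = q) \<and> (\<forall>i<K. \<forall>j<K. \<Phi> (a i) (b j) \<longleftrightarrow> R i j)"
proof -
  obtain a b where ab: "\<forall>i. length (a i) = p" "\<forall>S. length (b S) = q"
    "\<forall>i<K. \<forall>S. S \<subseteq> {..<K} \<longrightarrow> (\<Phi> (a i) (b S) \<longleftrightarrow> i \<in> S)"
    using assms by blast
  have "\<Phi> (a i) (b {u. u < K \<and> R u j}) \<longleftrightarrow> R i j" if "i < K" for i j
  proof -
    have "{u. u < K \<and> R u j} \<subseteq> {..<K}" by auto
    then have "\<Phi> (a i) (b {u. u < K \<and> R u j}) \<longleftrightarrow> i \<in> {u. u < K \<and> R u j}"
      using ab(3) that by blast
    then show ?thesis using that by simp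
  qed
  then show ?thesis
    using ab(1,2) by (intro exI[of _ a] exI[of _ "\<lambda>j. b {u. u < K \<and> R u j}"]) auto
qed

lemma unstable_trace_defines_rat:
  fixes M :: "('a, 'f, 'r, 'z) struc_scheme"
  assumes sat: "aleph1_saturated M" and unstable: "\<not> stable M"
  shows "trace_defines M rat_order"
proof -
  obtain \<phi> p q where \<phi>: "wf_fm M \<phi>" "fv \<phi> \<subseteq> {..<p + q}"
    and op: "\<And>K. \<exists>(a :: nat \<Rightarrow> 'a list) b. (\<forall>i. length (a i) = p \<and> length (b i) = q) \<and>
      (\<forall>i<K. \<forall>j<K. sat M (asg (a i @ b j) (\<lambda>_. undefined)) \<phi> \<longleftrightarrow> i < j)"
    using unstable unfolding stable_def by blast
  have finite_patterns: "\<exists>a b. (\<forall>i. length (a i) = p \<and> length (b i) = q) \<and>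
      (\<forall>i<K. \<forall>j<K. sat M (asg (a i @ b j) (\<lambda>_. undefined)) \<phi> \<longleftrightarrow> (from_nat i :: rat) < from_nat j)" for K
    by (rule order_pattern_relabel[OF op])
  obtain a b where ab: "\<forall>i. length (a i) = p \<and> length (b i) = q"
    "\<forall>i j. sat M (asg (a i @ b j) (\<lambda>_. undefined)) \<phi> \<longleftrightarrow> (from_nat i :: rat) < from_nat j"
    using saturated_realize_pattern[OF sat \<phi> finite_patterns] by blast
  show ?thesis
  proof (rule trace_defines_binary_from_formula[OF binary_struc_rat_order ultrahomogeneous_rat_less \<phi>])
    show "length (a (to_nat u)) = p" "length (b (to_nat u)) = q" for u :: rat
      using ab(1) by simp_all
    show "sat M (asg (a (to_nat u) @ b (to_nat v)) (\<lambda>_. undefined)) \<phi> \<longleftrightarrow> u < v" for u v :: rat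
      using ab(2) by simp
    show "\<exists>w. (u < w) \<noteq> (v < w)" if "u \<noteq> v" for u v :: rat
      using that by (cases u v rule: linorder_cases) auto
  qed
qed

lemma trace_defines_rat_unstable:
  fixes M :: "('a, 'f, 'r, 'z) struc_scheme"
  assumes "trace_defines M rat_order"
  shows "\<not> stable M"
proof -
  obtain \<theta> m ps \<tau> where \<theta>: "wf_fm M \<theta>" "fv \<theta> \<subseteq> {..<m + (m + length ps)}" "\<forall>u. length (\<tau> u) = m"
    "\<forall>u v. sat M (asg (\<tau> u @ (\<tau> v @ ps)) (\<lambda>_. undefined)) \<theta> \<longleftrightarrow> (u :: rat) < v"
    using trace_defines_relation_formula[OF assms binary_struc_definable[OF binary_struc_rat_order]]
    by blast
  have "\<forall>N. \<exists>(a :: nat \<Rightarrow> 'a list) b. (\<forall>i. length (a i) = m \<and> length (b i) = m + length ps) \<and>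
      (\<forall>i<N. \<forall>j<N. sat M (asg (a i @ b j) (\<lambda>_. undefined)) \<theta> \<longleftrightarrow> i < j)"
    using \<theta>(3,4) by (intro allI exI[of _ "\<lambda>i. \<tau> (of_nat i)"] exI[of _ "\<lambda>j. \<tau> (of_nat j) @ ps"]) simp
  then show ?thesis
    unfolding stable_def using \<theta>(1,2) by blast
qed

lemma IP_trace_defines_random_graph:
  fixes M :: "('a, 'f, 'r, 'z) struc_scheme"
  assumes sat: "aleph1_saturated M" and "has_IP M"
  shows "trace_defines M (graph_struc rado)"
proof -
  obtain \<phi> p q where \<phi>: "wf_fm M \<phi>" "fv \<phi> \<subseteq> {..<p + q}"
    and ip: "\<forall>K. \<exists>(a :: nat \<Rightarrow> 'a list) (b :: nat set \<Rightarrow> 'a list).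
      (\<forall>i. length (a i) = p) \<and> (\<forall>S. length (b S) = q) \<and>
      (\<forall>i<K. \<forall>S. S \<subseteq> {..<K} \<longrightarrow> (sat M (asg (a i @ b S) (\<lambda>_. undefined)) \<phi> \<longleftrightarrow> i \<in> S))"
    using assms(2) unfolding has_IP_def by (elim exE conjE) (rule that; assumption)
  have finite_patterns: "\<exists>a b. (\<forall>i. length (a i) = p \<and> length (b i) = q) \<and>
      (\<forall>i<K. \<forall>j<K. sat M (asg (a i @ b j) (\<lambda>_. undefined)) \<phi> \<longleftrightarrow> rado i j)" for K
    by (rule independence_pattern_relabel[OF ip[rule_format]])
  obtain a b where ab: "\<forall>i. length (a i) = p \<and> length (b i) = q"
    "\<forall>i j. sat M (asg (a i @ b j) (\<lambda>_. undefined)) \<phi> \<longleftrightarrow> rado i j"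
    using saturated_realize_pattern[OF sat \<phi> finite_patterns] by blast
  show ?thesis
  proof (rule trace_defines_binary_from_formula[OF binary_struc_graph_struc
        random_graph_ultrahomogeneous[OF is_random_graph_rado] \<phi>])
    show "length (a u) = p" "length (b u) = q" for u
      using ab(1) by simp_all
    show "sat M (asg (a u @ b v) (\<lambda>_. undefined)) \<phi> \<longleftrightarrow> rado u v" for u v
      using ab(2) by simp
    show "\<exists>w. rado u w \<noteq> rado v w" if "u \<noteq> v" for u v
      using rado_extension[of "{u}" "{v}" "{}"] that by auto
  qed
qed

lemma trace_defines_random_graph_IP:
  fixes M :: "('a, 'f, 'r, 'z) struc_scheme"
  assumes E: "is_random_graph E" and "trace_defines M (graph_struc E)"
  shows "has_IP M"
proof -
  obtain \<theta> m ps \<tau> where \<theta>: "wf_fm M \<theta>" "fv \<theta> \<subseteq> {..<m + (m + length ps)}" "\<forall>u. length (\<tau> u) = m"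
    "\<forall>u v. sat M (asg (\<tau> u @ (\<tau> v @ ps)) (\<lambda>_. undefined)) \<theta> \<longleftrightarrow> E u v"
    using trace_defines_relation_formula[OF assms(2) binary_struc_definable[OF binary_struc_graph_struc]]
    by blast
  have "\<exists>(a :: nat \<Rightarrow> 'a list) (b :: nat set \<Rightarrow> 'a list).
      (\<forall>i. length (a i) = m) \<and> (\<forall>S. length (b S) = m + length ps) \<and>
      (\<forall>i<N. \<forall>S. S \<subseteq> {..<N} \<longrightarrow> (sat M (asg (a i @ b S) (\<lambda>_. undefined)) \<theta> \<longleftrightarrow> i \<in> S))" for N
  proof -
    have "\<exists>z. \<forall>i<N. E i z \<longleftrightarrow> i \<in> S" for S
    proof -
      have "\<exists>z. (\<forall>u\<in>S \<inter> {..<N}. E u z) \<and> (\<forall>v\<in>{..<N} - S. \<not> E v z)"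
        by (rule random_graph_extension[OF E]) auto
      then show ?thesis by auto
    qed
    then have "\<exists>z. \<forall>S. \<forall>i<N. E i (z S) \<longleftrightarrow> i \<in> S"
      by (intro choice allI)
    then obtain z where z: "\<forall>S. \<forall>i<N. E i (z S) \<longleftrightarrow> i \<in> S"
      by blast
    then show ?thesis
      using \<theta>(3,4) by (intro exI[of _ \<tau>] exI[of _ "\<lambda>S. \<tau> (z S) @ ps"]) simp
  qed
  then show ?thesis
    unfolding has_IP_def using \<theta>(1,2) by blast
qed

theorem proposition4p8:
  fixes M :: "('a, 'f, 'r) struc"
  assumes "aleph1_saturated M"
  shows "(\<not> stable M \<longleftrightarrow> trace_defines M rat_order) \<and>
         (has_IP M \<longleftrightarrow> (\<exists>E. is_random_graph E \<and> trace_defines M (graph_struc E)))"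
proof (intro conjI iffI)
  show "trace_defines M rat_order" if "\<not> stable M"
    using unstable_trace_defines_rat[OF assms that] .
  show "\<not> stable M" if "trace_defines M rat_order"
    using trace_defines_rat_unstable[OF that] .
  show "\<exists>E. is_random_graph E \<and> trace_defines M (graph_struc E)" if "has_IP M"
    using is_random_graph_rado IP_trace_defines_random_graph[OF assms that] by blast
  show "has_IP M" if "\<exists>E. is_random_graph E \<and> trace_defines M (graph_struc E)"
    using that trace_defines_random_graph_IP by blast
qed

end
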